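(* Let $\mathcal A=\{a_1,\ldots,a_n\}\subset\mathbb N^m$ be a list of nonzero vectors and let $i\in\{1,\ldots,n\}$ be such that $a_i\in\sum_{j\neq i}\mathbb Q a_j$. Let $b\in\mathbb Z^+$ be a divisor of $B_i$ and set $\mathcal A':=\{a_1,\ldots,a_{i-1},b\,a_i,a_{i+1},\ldots,a_n\}$. Then $\mu(I_{\mathcal A})=\mu(I_{\mathcal A'})$. In particular, $I_{\mathcal A}$ is a complete intersection if and only if $I_{\mathcal A'}$ is.
   Context: $k$ is an arbitrary field. For a finite list $\mathcal A=\{a_1,\ldots,a_n\}$ of nonzero vectors in $\mathbb N^m$, the toric ideal $I_{\mathcal A}\subset k[x_1,\ldots,x_n]$ is the kernel of the $k$-algebra homomorphism $k[x_1,\ldots,x_n]\to k[t_1,\ldots,t_m]$, $x_i\mapsto t^{a_i}=t_1^{a_{i1}}\cdots t_m^{a_{im}}$; its height is $n-\mathrm{rk}(\mathbb Z\mathcal A)$. $\mu(I)$ denotes the minimal number of generators of an ideal $I$; $I$ is a complete intersection if $\mu(I)$ equals its height. When $a_i\in\sum_{j\neq i}\mathbb Q a_j$, define $B_i:=\min\{b\in\mathbb Z^+ : b\,a_i\in\sum_{j\in\{1,\ldots,n\},j\neq i}\mathbb Z a_j\}$. *)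

theory Defs
  imports Complex_Main "HOL-Library.Poly_Mapping"
begin

text \<open>Multivariate polynomials over 'k: finitely supported maps from monomials
(exponent vectors nat =>0 nat, variable x_i is index i) to coefficients.
The polynomial ring k[x_1,...,x_n] corresponds to variables 0,...,n-1.\<close>

type_synonym 'k mpoly = "(nat \<Rightarrow>\<^sub>0 nat) \<Rightarrow>\<^sub>0 'k"

definition poly_ring :: "nat \<Rightarrow> 'k::field mpoly set" where
  "poly_ring n = {p::'k mpoly. \<forall>\<alpha>\<in>Poly_Mapping.keys p. Poly_Mapping.keys \<alpha> \<subseteq> {..<n}}"

definition ideal_gen :: "nat \<Rightarrow> 'k::field mpoly set \<Rightarrow> 'k mpoly set" where
  "ideal_gen n G = {p. \<exists>F r. finite F \<and> F \<subseteq> G \<and> (\<forall>g\<in>F. r g \<in> poly_ring n)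
                        \<and> p = (\<Sum>g\<in>F. r g * g)}"

definition mu :: "nat \<Rightarrow> 'k::field mpoly set \<Rightarrow> nat" where
  "mu n I = (LEAST c. \<exists>G. finite G \<and> G \<subseteq> poly_ring n \<and> ideal_gen n G = I \<and> card G = c)"

text \<open>A is a list of vectors in N^m, represented as functions nat => nat
(coordinates 0..m-1). The image of x^alpha is t^(sum_i alpha_i a_i).\<close>
definition toric_exp :: "(nat \<Rightarrow> nat) list \<Rightarrow> (nat \<Rightarrow>\<^sub>0 nat) \<Rightarrow> (nat \<Rightarrow> nat)" where
  "toric_exp A \<alpha> = (\<lambda>l. \<Sum>i<length A. Poly_Mapping.lookup \<alpha> i * (A ! i) l)"

definition toric_image_coeff :: "(nat \<Rightarrow> nat) list \<Rightarrow> 'k::field mpoly \<Rightarrow> (nat \<Rightarrow> nat) \<Rightarrow> 'k" where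
  "toric_image_coeff A p \<beta> = (\<Sum>\<alpha>\<in>{\<alpha>\<in>Poly_Mapping.keys p. toric_exp A \<alpha> = \<beta>}. Poly_Mapping.lookup p \<alpha>)"

text \<open>The toric ideal: kernel of k[x_1..x_n] -> k[t_1..t_m], x_i |-> t^(a_i).\<close>
definition toric_ideal :: "(nat \<Rightarrow> nat) list \<Rightarrow> 'k::field mpoly set" where
  "toric_ideal A = {p \<in> poly_ring (length A). \<forall>\<beta>. toric_image_coeff A p \<beta> = 0}"

text \<open>Rank of the lattice ZA (= dimension of the Q-span of the a_i).\<close>
definition lin_indep_Q :: "(nat \<Rightarrow> nat) list \<Rightarrow> nat set \<Rightarrow> bool" where
  "lin_indep_Q A S = (\<forall>c::nat \<Rightarrow> rat. (\<forall>l. (\<Sum>j\<in>S. c j * of_nat ((A ! j) l)) = 0)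
                         \<longrightarrow> (\<forall>j\<in>S. c j = 0))"

definition lattice_rank :: "(nat \<Rightarrow> nat) list \<Rightarrow> nat" where
  "lattice_rank A = Max {card S | S. S \<subseteq> {..<length A} \<and> lin_indep_Q A S}"

text \<open>Height of I_A, given by n - rk(ZA).\<close>
definition toric_height :: "(nat \<Rightarrow> nat) list \<Rightarrow> nat" where
  "toric_height A = length A - lattice_rank A"

definition toric_ci :: "'k::field itself \<Rightarrow> (nat \<Rightarrow> nat) list \<Rightarrow> bool" where
  "toric_ci _ A = (mu (length A) (toric_ideal A :: 'k mpoly set) = toric_height A)"

definition in_Q_span_others :: "(nat \<Rightarrow> nat) list \<Rightarrow> nat \<Rightarrow> bool" where
  "in_Q_span_others A i = (\<exists>q::nat \<Rightarrow> rat. \<forall>l.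
      of_nat ((A ! i) l) = (\<Sum>j\<in>{..<length A} - {i}. q j * of_nat ((A ! j) l)))"

definition B_index :: "(nat \<Rightarrow> nat) list \<Rightarrow> nat \<Rightarrow> nat" where
  "B_index A i = (LEAST b. b > 0 \<and> (\<exists>z::nat \<Rightarrow> int. \<forall>l.
      int b * int ((A ! i) l) = (\<Sum>j\<in>{..<length A} - {i}. z j * int ((A ! j) l))))"

end

theory Submission
  imports Defs
begin

text \<open>
Let \<open>\<phi>\<close> be the substitution \<open>x\<^sub>i \<mapsto> x\<^sub>i\<^sup>b\<close>; it maps \<open>I\<^sub>A\<^sub>'\<close> into \<open>I\<^sub>A\<close>.
Since \<open>b\<close> divides \<open>B\<^sub>i\<close>, any two monomials of the same \<open>A\<close>-degree have \<open>x\<^sub>i\<close>-exponents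
congruent modulo \<open>b\<close>, so every \<open>A\<close>-homogeneous element of \<open>I\<^sub>A\<close> factors as \<open>x\<^sub>i\<^sup>r \<phi>(g)\<close>
with \<open>g \<in> I\<^sub>A\<^sub>'\<close>. Hence \<open>\<phi>\<close> maps generators of \<open>I\<^sub>A\<^sub>'\<close> to generators of \<open>I\<^sub>A\<close>.
Conversely, the grading by \<open>A\<close>-degree is positive, so by graded Nakayama \<open>I\<^sub>A\<close> has a
homogeneous generating set with at most \<open>\<mu>(I\<^sub>A)\<close> elements; writing them as \<open>x\<^sub>i\<^sup>r \<phi>(g)\<close>,
the \<open>g\<close> generate \<open>I\<^sub>A\<^sub>'\<close>, because the left inverse \<open>\<rho>\<close> of \<open>\<phi>\<close> (drop the monomials whose
\<open>x\<^sub>i\<close>-exponent is not divisible by \<open>b\<close>, divide that exponent by \<open>b\<close> in the others) satisfies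
\<open>\<rho>(f \<phi>(g)) = \<rho>(f) g\<close>. Finally \<open>A\<close> and \<open>A'\<close> span the same \<open>\<rat>\<close>-vector space, so the
heights agree.
\<close>

section \<open>Counting vectors independent modulo a subspace\<close>

context vector_space begin

lemma independent_Un_if_independent_mod:
  assumes W: "subspace W" and fH: "finite H"
    and ind: "\<forall>c. (\<Sum>h\<in>H. c h *s h) \<in> W \<longrightarrow> (\<forall>h\<in>H. c h = 0)"
    and C: "C \<subseteq> W" "independent C"
  shows "independent (H \<union> C)" and "H \<inter> C = {}"
proof -
  show HC: "H \<inter> C = {}"
  proof (rule ccontr)
    assume "H \<inter> C \<noteq> {}"
    then obtain h where h: "h \<in> H" "h \<in> C" by auto
    define c where "c = (\<lambda>x. if x = h then (1::'a) else 0)"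
    have "(\<Sum>x\<in>H. c x *s x) = (\<Sum>x\<in>H. if x = h then x else 0)"
      by (rule sum.cong) (auto simp: c_def)
    also have "\<dots> = h" using h(1) fH by simp
    finally have "(\<Sum>x\<in>H. c x *s x) \<in> W" using h C(1) by auto
    hence "c h = 0" using ind h by blast
    thus False by (simp add: c_def)
  qed
  have "independent (H' \<union> C)" if "H' \<subseteq> H" for H'
  proof -
    have "finite H'" using that fH finite_subset by blast
    thus ?thesis using that
    proof (induction H')
      case empty then show ?case using C(2) by simp
    next
      case (insert h H')
      have IH: "independent (H' \<union> C)" using insert by auto
      have hnot: "h \<notin> H' \<union> C" using insert HC by auto
      have "h \<notin> span (H' \<union> C)"
      proof
        assume "h \<in> span (H' \<union> C)"
        then obtain x y where xy: "h = x + y" "x \<in> span H'" "y \<in> span C"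
          unfolding span_Un by blast
        obtain u where u: "x = (\<Sum>v\<in>H'. u v *s v)"
          using xy(2) span_finite[OF insert(1)] by auto
        have yW: "y \<in> W" using xy(3) C(1) span_minimal[OF _ W] by blast
        define c where "c = (\<lambda>v. if v = h then (1::'a) else if v \<in> H' then - u v else 0)"
        have "(\<Sum>v\<in>H. c v *s v) = (\<Sum>v\<in>insert h H'. c v *s v)"
          by (rule sum.mono_neutral_right) (use fH insert in \<open>auto simp: c_def\<close>)
        also have "\<dots> = h + (\<Sum>v\<in>H'. c v *s v)"
          using insert by (simp add: c_def)
        also have "(\<Sum>v\<in>H'. c v *s v) = (\<Sum>v\<in>H'. - (u v *s v))"
          by (rule sum.cong) (use insert in \<open>auto simp: c_def scale_minus_left\<close>)
        also have "\<dots> = - x" by (simp add: u sum_negf)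
        finally have "(\<Sum>v\<in>H. c v *s v) = y" using xy(1) by simp
        hence "c h = 0" using ind yW insert by auto
        thus False by (simp add: c_def)
      qed
      then show ?case using IH hnot by (simp add: independent_insert)
    qed
  qed
  thus "independent (H \<union> C)" by blast
qed

text \<open>Extend \<open>H\<close> by a basis \<open>C\<close> of \<open>W \<inter> span (G \<union> H)\<close>: then \<open>H \<union> C\<close> is independent
  and lies in \<open>span (G \<union> C)\<close>.\<close>

lemma card_le_if_independent_mod:
  assumes W: "subspace W" and fG: "finite G" and fH: "finite H"
    and ind: "\<forall>c. (\<Sum>h\<in>H. c h *s h) \<in> W \<longrightarrow> (\<forall>h\<in>H. c h = 0)"
    and spans: "\<forall>h\<in>H. \<exists>s\<in>span G. h - s \<in> W"
  shows "card H \<le> card G"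
proof -
  define U where "U = span (G \<union> H)"
  obtain C where C: "C \<subseteq> W \<inter> U" "independent C" "W \<inter> U \<subseteq> span C"
    using maximal_independent_subset by blast
  have fC: "finite C"
    using independent_span_bound[OF _ C(2)] C(1) fG fH U_def by auto
  have HC: "independent (H \<union> C)" "H \<inter> C = {}"
    using independent_Un_if_independent_mod[OF W fH ind _ C(2)] C(1) by auto
  have "H \<union> C \<subseteq> span (G \<union> C)"
  proof
    fix x assume "x \<in> H \<union> C"
    then show "x \<in> span (G \<union> C)"
    proof
      assume "x \<in> C" thus ?thesis by (simp add: span_base)
    next
      assume xH: "x \<in> H"
      then obtain s where s: "s \<in> span G" "x - s \<in> W" using spans by blast
      have "x - s \<in> U" unfolding U_def
        using s(1) xH by (metis UnI2 span_base span_diff span_mono sup_ge1 subsetD)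
      hence "x - s \<in> span C" using s(2) C(3) by blast
      hence "s + (x - s) \<in> span (G \<union> C)"
        using s(1) by (meson span_add span_mono subsetD sup_ge1 sup_ge2)
      thus ?thesis by simp
    qed
  qed
  hence "card (H \<union> C) \<le> card (G \<union> C)"
    using independent_span_bound[OF _ HC(1)] fG fC by auto
  also have "\<dots> \<le> card G + card C" by (rule card_Un_le)
  also have "card (H \<union> C) = card H + card C" using HC(2) fH fC by (simp add: card_Un_disjoint)
  finally show ?thesis by simp
qed

lemma independent_mod_if_minimal:
  assumes W: "subspace W" and fH: "finite H"
    and spans: "\<forall>p\<in>P. \<exists>s\<in>span H. p - s \<in> W"
    and minimal: "\<And>H'. H' \<subset> H \<Longrightarrow> \<not> (\<forall>p\<in>P. \<exists>s\<in>span H'. p - s \<in> W)"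
  shows "\<forall>c. (\<Sum>h\<in>H. c h *s h) \<in> W \<longrightarrow> (\<forall>h\<in>H. c h = 0)"
proof (intro allI impI ballI, rule ccontr)
  fix c h\<^sub>0
  assume w: "(\<Sum>h\<in>H. c h *s h) \<in> W" and h\<^sub>0: "h\<^sub>0 \<in> H" and c_h\<^sub>0: "c h\<^sub>0 \<noteq> 0"
  define H' where "H' = H - {h\<^sub>0}"
  have "\<forall>p\<in>P. \<exists>s'\<in>span H'. p - s' \<in> W"
  proof
    fix p assume "p \<in> P"
    then obtain s where s: "s \<in> span H" "p - s \<in> W" using spans by blast
    obtain u where u: "s = (\<Sum>h\<in>H. u h *s h)" using s(1) span_finite[OF fH] by blast
    define t where "t = u h\<^sub>0 / c h\<^sub>0"
    have "s - t *s (\<Sum>h\<in>H. c h *s h) = (\<Sum>h\<in>H. (u h - t * c h) *s h)"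
      unfolding u by (simp add: scale_sum_right sum_subtractf scale_left_diff_distrib)
    also have "\<dots> = (\<Sum>h\<in>H'. (u h - t * c h) *s h)"
      using fH h\<^sub>0 c_h\<^sub>0 by (simp add: H'_def sum.remove t_def)
    also have "\<dots> \<in> span H'" by (intro span_sum span_scale span_base)
    finally have "s - t *s (\<Sum>h\<in>H. c h *s h) \<in> span H'" .
    moreover have "p - (s - t *s (\<Sum>h\<in>H. c h *s h)) \<in> W"
      using subspace_add[OF W s(2) subspace_scale[OF W w]] by (simp add: algebra_simps)
    ultimately show "\<exists>s'\<in>span H'. p - s' \<in> W" by blast
  qed
  moreover have "H' \<subset> H" using h\<^sub>0 by (auto simp: H'_def)
  ultimately show False using minimal[of H'] by blast
qed

lemma exists_independent_mod_spanning_subset: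
  assumes W: "subspace W" and fS: "finite S"
    and spans: "\<forall>p\<in>P. \<exists>s\<in>span S. p - s \<in> W"
  obtains H where "H \<subseteq> S" and "\<forall>p\<in>P. \<exists>s\<in>span H. p - s \<in> W"
    and "\<forall>c. (\<Sum>h\<in>H. c h *s h) \<in> W \<longrightarrow> (\<forall>h\<in>H. c h = 0)"
proof -
  define spanning where "spanning H \<longleftrightarrow> H \<subseteq> S \<and> (\<forall>p\<in>P. \<exists>s\<in>span H. p - s \<in> W)" for H
  obtain H where H: "spanning H" and H_min: "\<And>H'. spanning H' \<Longrightarrow> card H \<le> card H'"
    using ex_has_least_nat[of spanning S card] spans unfolding spanning_def by blast
  then have H_S: "H \<subseteq> S" and H_spans: "\<forall>p\<in>P. \<exists>s\<in>span H. p - s \<in> W"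
    unfolding spanning_def by auto
  have H_fin: "finite H" using H_S fS finite_subset by blast
  have "\<forall>c. (\<Sum>h\<in>H. c h *s h) \<in> W \<longrightarrow> (\<forall>h\<in>H. c h = 0)"
  proof (rule independent_mod_if_minimal[OF W H_fin H_spans])
    fix H' assume "H' \<subset> H"
    then have "card H' < card H" using H_fin psubset_card_mono by blast
    with H_S \<open>H' \<subset> H\<close> H_min show "\<not> (\<forall>p\<in>P. \<exists>s\<in>span H'. p - s \<in> W)"
      unfolding spanning_def by (meson leD order.trans psubset_imp_subset)
  qed
  with H_S H_spans show ?thesis by (rule that)
qed

end

type_synonym monomial = "nat \<Rightarrow>\<^sub>0 nat"

definition lin_ext :: "('a \<Rightarrow> 'b::zero \<Rightarrow> 'c::comm_monoid_add) \<Rightarrow> ('a \<Rightarrow>\<^sub>0 'b) \<Rightarrow> 'c" where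
  "lin_ext F p = (\<Sum>\<alpha>\<in>Poly_Mapping.keys p. F \<alpha> (Poly_Mapping.lookup p \<alpha>))"

definition coeff_additive :: "('a \<Rightarrow> 'b::monoid_add \<Rightarrow> 'c::monoid_add) \<Rightarrow> bool" where
  "coeff_additive F \<longleftrightarrow> (\<forall>\<alpha>. F \<alpha> 0 = 0) \<and> (\<forall>\<alpha> a c. F \<alpha> (a + c) = F \<alpha> a + F \<alpha> c)"

lemma coeff_additive_zero: "coeff_additive F \<Longrightarrow> F \<alpha> 0 = 0"
  unfolding coeff_additive_def by blast

lemma lin_ext_superset:
  assumes "\<And>\<alpha>. F \<alpha> 0 = 0" "finite S" "Poly_Mapping.keys p \<subseteq> S"
  shows "lin_ext F p = (\<Sum>\<alpha>\<in>S. F \<alpha> (Poly_Mapping.lookup p \<alpha>))"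
  unfolding lin_ext_def by (rule sum.mono_neutral_left) (use assms in \<open>auto simp: in_keys_iff\<close>)

lemma lin_ext_zero [simp]: "lin_ext F 0 = 0"
  by (simp add: lin_ext_def)

lemma lin_ext_add:
  fixes F :: "'a \<Rightarrow> 'b::monoid_add \<Rightarrow> 'c::comm_monoid_add"
  assumes "coeff_additive F"
  shows "lin_ext F (p + q) = lin_ext F p + lin_ext F q"
proof -
  let ?S = "Poly_Mapping.keys p \<union> Poly_Mapping.keys q"
  note z = coeff_additive_zero[OF assms]
  have "lin_ext F (p + q) = (\<Sum>\<alpha>\<in>?S. F \<alpha> (Poly_Mapping.lookup (p + q) \<alpha>))"
    by (rule lin_ext_superset) (auto simp: keys_add z)
  also have "\<dots> = (\<Sum>\<alpha>\<in>?S. F \<alpha> (Poly_Mapping.lookup p \<alpha>) + F \<alpha> (Poly_Mapping.lookup q \<alpha>))"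
    using assms by (simp add: lookup_add coeff_additive_def)
  also have "\<dots> = lin_ext F p + lin_ext F q"
    by (simp add: sum.distrib lin_ext_superset[of F ?S p, OF z] lin_ext_superset[of F ?S q, OF z])
  finally show ?thesis .
qed

lemma lin_ext_sum:
  fixes F :: "'a \<Rightarrow> 'b::comm_monoid_add \<Rightarrow> 'c::comm_monoid_add"
  assumes "coeff_additive F"
  shows "lin_ext F (sum f I) = (\<Sum>x\<in>I. lin_ext F (f x))"
proof (cases "finite I")
  case True
  then show ?thesis by (induction I) (simp_all add: lin_ext_add[OF assms])
qed simp

lemma lin_ext_single:
  assumes "F \<alpha> 0 = 0"
  shows "lin_ext F (Poly_Mapping.single \<alpha> c) = F \<alpha> c"
  using assms by (simp add: lin_ext_def)

lemma coeff_additive_single [simp]: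
  "coeff_additive (\<lambda>\<alpha> c. Poly_Mapping.single (f \<alpha>) (c::'b::monoid_add))"
  by (simp add: coeff_additive_def single_add)

lemma coeff_additive_single_if [simp]:
  "coeff_additive (\<lambda>\<alpha> c. if P \<alpha> then Poly_Mapping.single (f \<alpha>) (c::'b::monoid_add) else 0)"
  by (simp add: coeff_additive_def single_add)

lemma poly_mapping_sum_single:
  "p = (\<Sum>\<alpha>\<in>Poly_Mapping.keys p. Poly_Mapping.single \<alpha> (Poly_Mapping.lookup p \<alpha>))"
proof (rule poly_mapping_eqI)
  fix \<beta>
  have "Poly_Mapping.lookup (\<Sum>\<alpha>\<in>Poly_Mapping.keys p. Poly_Mapping.single \<alpha> (Poly_Mapping.lookup p \<alpha>)) \<beta>
      = (\<Sum>\<alpha>\<in>Poly_Mapping.keys p. if \<alpha> = \<beta> then Poly_Mapping.lookup p \<alpha> else 0)"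
    by (simp add: lookup_sum lookup_single when_def)
  also have "\<dots> = Poly_Mapping.lookup p \<beta>"
    by (simp add: in_keys_iff)
  finally show "Poly_Mapping.lookup p \<beta>
      = Poly_Mapping.lookup (\<Sum>\<alpha>\<in>Poly_Mapping.keys p. Poly_Mapping.single \<alpha> (Poly_Mapping.lookup p \<alpha>)) \<beta>"
    by simp
qed

lemma times_poly_mapping_eq_sum_single:
  "(p::'a::monoid_add \<Rightarrow>\<^sub>0 'b::comm_semiring_1) * q = (\<Sum>\<alpha>\<in>Poly_Mapping.keys p. \<Sum>\<beta>\<in>Poly_Mapping.keys q.
      Poly_Mapping.single (\<alpha> + \<beta>) (Poly_Mapping.lookup p \<alpha> * Poly_Mapping.lookup q \<beta>))"
proof -
  have "p * q = (\<Sum>\<alpha>\<in>Poly_Mapping.keys p. Poly_Mapping.single \<alpha> (Poly_Mapping.lookup p \<alpha>))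
              * (\<Sum>\<beta>\<in>Poly_Mapping.keys q. Poly_Mapping.single \<beta> (Poly_Mapping.lookup q \<beta>))"
    using poly_mapping_sum_single[of p] poly_mapping_sum_single[of q] by simp
  then show ?thesis by (simp add: sum_product mult_single)
qed

lemma single_times_poly_mapping:
  "Poly_Mapping.single \<gamma> c * (q::'a::monoid_add \<Rightarrow>\<^sub>0 'b::comm_semiring_1)
     = (\<Sum>\<alpha>\<in>Poly_Mapping.keys q. Poly_Mapping.single (\<gamma> + \<alpha>) (c * Poly_Mapping.lookup q \<alpha>))"
proof -
  have "Poly_Mapping.single \<gamma> c * q
      = Poly_Mapping.single \<gamma> c * (\<Sum>\<alpha>\<in>Poly_Mapping.keys q. Poly_Mapping.single \<alpha> (Poly_Mapping.lookup q \<alpha>))"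
    by (subst poly_mapping_sum_single) (rule refl)
  thus ?thesis by (simp add: sum_distrib_left mult_single)
qed

lemma lin_ext_mult:
  fixes F :: "'a::monoid_add \<Rightarrow> 'b::comm_semiring_1 \<Rightarrow> 'c::comm_monoid_add"
  assumes "coeff_additive F"
  shows "lin_ext F (p * q) = (\<Sum>\<alpha>\<in>Poly_Mapping.keys p. \<Sum>\<beta>\<in>Poly_Mapping.keys q.
      F (\<alpha> + \<beta>) (Poly_Mapping.lookup p \<alpha> * Poly_Mapping.lookup q \<beta>))"
proof -
  note z = coeff_additive_zero[OF assms]
  show ?thesis
    by (subst times_poly_mapping_eq_sum_single) (simp add: lin_ext_sum[OF assms] lin_ext_single[of F, OF z])
qed

lemma lin_ext_lin_ext:
  assumes "coeff_additive F" "\<And>\<alpha>. G \<alpha> 0 = 0"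
  shows "lin_ext F (lin_ext G p) = (\<Sum>\<alpha>\<in>Poly_Mapping.keys p. lin_ext F (G \<alpha> (Poly_Mapping.lookup p \<alpha>)))"
  unfolding lin_ext_def[of G] by (simp add: lin_ext_sum[OF assms(1)])

lemma toric_exp_add: "toric_exp A (\<alpha> + \<beta>) l = toric_exp A \<alpha> l + toric_exp A \<beta> l"
  by (simp add: toric_exp_def lookup_add algebra_simps sum.distrib)

lemma toric_exp_single:
  "toric_exp A (Poly_Mapping.single j c) l = (if j < length A then c * (A ! j) l else 0)"
  by (simp add: toric_exp_def lookup_single when_def if_distrib[of "\<lambda>x. x * _"] cong: if_cong)

lemma toric_image_coeff_altdef: "toric_image_coeff A p \<beta> =
   (\<Sum>\<alpha>\<in>Poly_Mapping.keys p. if toric_exp A \<alpha> = \<beta> then Poly_Mapping.lookup p \<alpha> else 0)"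
  unfolding toric_image_coeff_def by (simp add: sum.If_cases Int_def conj_commute)

lemma toric_image_coeff_eq_lin_ext:
  "toric_image_coeff A p \<beta> = lin_ext (\<lambda>\<alpha> c. if toric_exp A \<alpha> = \<beta> then c else 0) p"
  unfolding toric_image_coeff_altdef lin_ext_def ..

lemma toric_image_coeff_add:
  "toric_image_coeff A (p + q) \<beta> = toric_image_coeff A p \<beta> + toric_image_coeff A q \<beta>"
  unfolding toric_image_coeff_eq_lin_ext by (rule lin_ext_add) (simp add: coeff_additive_def)

lemma toric_image_coeff_zero [simp]: "toric_image_coeff A 0 \<beta> = 0"
  by (simp add: toric_image_coeff_def)

lemma toric_image_coeff_sum:
  "toric_image_coeff A (sum f I) \<beta> = (\<Sum>x\<in>I. toric_image_coeff A (f x) \<beta>)"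
  unfolding toric_image_coeff_eq_lin_ext by (rule lin_ext_sum) (simp add: coeff_additive_def)

lemma toric_image_coeff_single:
  "toric_image_coeff A (Poly_Mapping.single \<alpha> c) \<beta> = (if toric_exp A \<alpha> = \<beta> then c else 0)"
  by (simp add: toric_image_coeff_altdef)

lemma toric_image_coeff_lin_ext: "toric_image_coeff A (lin_ext F p) \<beta>
   = (\<Sum>\<alpha>\<in>Poly_Mapping.keys p. toric_image_coeff A (F \<alpha> (Poly_Mapping.lookup p \<alpha>)) \<beta>)"
  unfolding lin_ext_def by (rule toric_image_coeff_sum)

lemma toric_image_coeff_single_mult:
  "toric_image_coeff A (Poly_Mapping.single \<alpha> c * p) \<beta> =
     (if \<forall>l. toric_exp A \<alpha> l \<le> \<beta> l
      then c * toric_image_coeff A p (\<lambda>l. \<beta> l - toric_exp A \<alpha> l) else 0)"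
proof -
  have "toric_image_coeff A (Poly_Mapping.single \<alpha> c * p) \<beta> =
     (\<Sum>\<gamma>\<in>Poly_Mapping.keys p. if toric_exp A (\<alpha> + \<gamma>) = \<beta> then c * Poly_Mapping.lookup p \<gamma> else 0)"
    by (simp add: single_times_poly_mapping toric_image_coeff_sum toric_image_coeff_single)
  also have "\<dots> = (if \<forall>l. toric_exp A \<alpha> l \<le> \<beta> l
                    then c * toric_image_coeff A p (\<lambda>l. \<beta> l - toric_exp A \<alpha> l) else 0)"
  proof (cases "\<forall>l. toric_exp A \<alpha> l \<le> \<beta> l")
    case True
    have "toric_exp A \<alpha> l + toric_exp A \<gamma> l = \<beta> l \<longleftrightarrow> toric_exp A \<gamma> l = \<beta> l - toric_exp A \<alpha> l"
      for \<gamma> l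
      using True[rule_format, of l] by arith
    then have "toric_exp A (\<alpha> + \<gamma>) = \<beta> \<longleftrightarrow> toric_exp A \<gamma> = (\<lambda>l. \<beta> l - toric_exp A \<alpha> l)" for \<gamma>
      by (simp add: fun_eq_iff toric_exp_add)
    then show ?thesis
      using True by (simp add: toric_image_coeff_altdef sum_distrib_left if_distrib cong: if_cong)
  next
    case False
    then obtain l where "toric_exp A \<alpha> l > \<beta> l" by (auto simp: not_le)
    hence "toric_exp A (\<alpha> + \<gamma>) l \<noteq> \<beta> l" for \<gamma>
      using toric_exp_add[of A \<alpha> \<gamma> l] by arith
    hence "toric_exp A (\<alpha> + \<gamma>) \<noteq> \<beta>" for \<gamma> by metis
    then show ?thesis using False by (subst if_not_P) simp_all
  qed
  finally show ?thesis .
qed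

lemma in_poly_ring:
  "p \<in> poly_ring n \<longleftrightarrow> (\<forall>\<alpha>\<in>Poly_Mapping.keys p. Poly_Mapping.keys \<alpha> \<subseteq> {..<n})"
  by (simp add: poly_ring_def)

lemma poly_ring_zero [simp]: "0 \<in> poly_ring n"
  by (simp add: in_poly_ring)

lemma poly_ring_one [simp]: "1 \<in> poly_ring n"
  by (simp add: in_poly_ring)

lemma poly_ring_add:
  assumes "p \<in> poly_ring n" "q \<in> poly_ring n"
  shows "p + q \<in> poly_ring n"
  using assms keys_add[of p q] unfolding in_poly_ring by (meson Un_iff subsetD)

lemma poly_ring_mult:
  assumes "p \<in> poly_ring n" "q \<in> poly_ring n"
  shows "p * q \<in> poly_ring n"
  unfolding in_poly_ring
proof
  fix \<gamma> assume "\<gamma> \<in> Poly_Mapping.keys (p * q)"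
  then obtain a c where ac: "\<gamma> = a + c" "a \<in> Poly_Mapping.keys p" "c \<in> Poly_Mapping.keys q"
    using keys_mult[of p q] by blast
  have "Poly_Mapping.keys \<gamma> \<subseteq> Poly_Mapping.keys a \<union> Poly_Mapping.keys c"
    unfolding ac(1) by (rule keys_add)
  also have "\<dots> \<subseteq> {..<n}" using assms ac unfolding in_poly_ring by blast
  finally show "Poly_Mapping.keys \<gamma> \<subseteq> {..<n}" .
qed

lemma poly_ring_sum: "(\<And>x. x \<in> I \<Longrightarrow> f x \<in> poly_ring n) \<Longrightarrow> sum f I \<in> poly_ring n"
  by (induction I rule: infinite_finite_induct) (simp_all add: poly_ring_add)

lemma poly_ring_single: "Poly_Mapping.keys \<alpha> \<subseteq> {..<n} \<Longrightarrow> Poly_Mapping.single \<alpha> c \<in> poly_ring n"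
  by (simp add: in_poly_ring)

lemma poly_ring_lin_ext:
  "(\<And>\<alpha>. \<alpha> \<in> Poly_Mapping.keys p \<Longrightarrow> F \<alpha> (Poly_Mapping.lookup p \<alpha>) \<in> poly_ring n)
   \<Longrightarrow> lin_ext F p \<in> poly_ring n"
  unfolding lin_ext_def by (rule poly_ring_sum)

lemma in_toric_ideal:
  "p \<in> toric_ideal A \<longleftrightarrow> p \<in> poly_ring (length A) \<and> (\<forall>\<beta>. toric_image_coeff A p \<beta> = 0)"
  by (simp add: toric_ideal_def)

lemma toric_ideal_zero [simp]: "0 \<in> toric_ideal A"
  by (simp add: in_toric_ideal)

lemma toric_ideal_add: "p \<in> toric_ideal A \<Longrightarrow> q \<in> toric_ideal A \<Longrightarrow> p + q \<in> toric_ideal A"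
  by (simp add: in_toric_ideal poly_ring_add toric_image_coeff_add)

lemma toric_ideal_mult:
  assumes "r \<in> poly_ring (length A)" "p \<in> toric_ideal A"
  shows "r * p \<in> toric_ideal A"
proof -
  have "toric_image_coeff A (r * p) \<beta> = 0" for \<beta>
  proof -
    have "toric_image_coeff A (r * p) \<beta> = (\<Sum>\<alpha>\<in>Poly_Mapping.keys r.
        toric_image_coeff A (Poly_Mapping.single \<alpha> (Poly_Mapping.lookup r \<alpha>) * p) \<beta>)"
      by (subst poly_mapping_sum_single[of r]) (simp only: sum_distrib_right toric_image_coeff_sum)
    also have "\<dots> = 0"
    proof (rule sum.neutral, rule ballI)
      fix \<alpha>
      show "toric_image_coeff A (Poly_Mapping.single \<alpha> (Poly_Mapping.lookup r \<alpha>) * p) \<beta> = 0"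
        using assms(2) unfolding toric_image_coeff_single_mult in_toric_ideal by simp
    qed
    finally show ?thesis .
  qed
  thus ?thesis using assms poly_ring_mult in_toric_ideal by blast
qed

lemma ideal_gen_induct [consumes 1, case_names zero add mult]:
  assumes "p \<in> ideal_gen n G" "P 0" "\<And>p q. P p \<Longrightarrow> P q \<Longrightarrow> P (p + q)"
    "\<And>r g. r \<in> poly_ring n \<Longrightarrow> g \<in> G \<Longrightarrow> P (r * g)"
  shows "P p"
proof -
  obtain F r where F: "finite F" "F \<subseteq> G" "\<forall>g\<in>F. r g \<in> poly_ring n" "p = (\<Sum>g\<in>F. r g * g)"
    using assms(1) unfolding ideal_gen_def by blast
  have "P (\<Sum>g\<in>F'. r g * g)" if "F' \<subseteq> F" for F'
    using finite_subset[OF that F(1)] that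
    by (induction F') (use assms(2-4) F in auto)
  thus ?thesis using F(4) by blast
qed

lemma ideal_gen_zero [simp]: "0 \<in> ideal_gen n G"
  unfolding ideal_gen_def by (intro CollectI exI[of _ "{}"]) simp

lemma ideal_gen_add:
  assumes "p \<in> ideal_gen n G" "q \<in> ideal_gen n G"
  shows "p + q \<in> ideal_gen n G"
proof -
  obtain F1 r1 where F1: "finite F1" "F1 \<subseteq> G" "\<forall>g\<in>F1. r1 g \<in> poly_ring n" "p = (\<Sum>g\<in>F1. r1 g * g)"
    using assms(1) unfolding ideal_gen_def by blast
  obtain F2 r2 where F2: "finite F2" "F2 \<subseteq> G" "\<forall>g\<in>F2. r2 g \<in> poly_ring n" "q = (\<Sum>g\<in>F2. r2 g * g)"
    using assms(2) unfolding ideal_gen_def by blast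
  define r where "r g = (if g \<in> F1 then r1 g else 0) + (if g \<in> F2 then r2 g else 0)" for g
  have "p = (\<Sum>g\<in>F1 \<union> F2. (if g \<in> F1 then r1 g else 0) * g)"
    unfolding F1(4) by (rule sum.mono_neutral_cong_left) (use F1 F2 in auto)
  moreover have "q = (\<Sum>g\<in>F1 \<union> F2. (if g \<in> F2 then r2 g else 0) * g)"
    unfolding F2(4) by (rule sum.mono_neutral_cong_left) (use F1 F2 in auto)
  ultimately have "p + q = (\<Sum>g\<in>F1 \<union> F2. r g * g)"
    by (simp add: r_def sum.distrib distrib_right)
  moreover have "\<forall>g\<in>F1 \<union> F2. r g \<in> poly_ring n"
    using F1 F2 by (auto simp: r_def intro: poly_ring_add)
  ultimately show ?thesis unfolding ideal_gen_def using F1 F2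
    by (intro CollectI exI[of _ "F1 \<union> F2"] exI[of _ r]) auto
qed

lemma ideal_gen_mult:
  assumes "r \<in> poly_ring n" "p \<in> ideal_gen n G"
  shows "r * p \<in> ideal_gen n G"
proof -
  obtain F s where F: "finite F" "F \<subseteq> G" "\<forall>g\<in>F. s g \<in> poly_ring n" "p = (\<Sum>g\<in>F. s g * g)"
    using assms(2) unfolding ideal_gen_def by blast
  have "r * p = (\<Sum>g\<in>F. (r * s g) * g)" using F(4) by (simp add: sum_distrib_left mult.assoc)
  moreover have "\<forall>g\<in>F. r * s g \<in> poly_ring n" using F assms by (auto intro: poly_ring_mult)
  ultimately show ?thesis unfolding ideal_gen_def using F
    by (intro CollectI exI[of _ F] exI[of _ "\<lambda>g. r * s g"]) auto
qed

lemma ideal_gen_base: "g \<in> G \<Longrightarrow> g \<in> ideal_gen n G"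
  unfolding ideal_gen_def by (intro CollectI exI[of _ "{g}"] exI[of _ "\<lambda>_. 1"]) simp

lemma ideal_gen_sum: "(\<And>x. x \<in> I \<Longrightarrow> f x \<in> ideal_gen n G) \<Longrightarrow> sum f I \<in> ideal_gen n G"
  by (induction I rule: infinite_finite_induct) (simp_all add: ideal_gen_add)

lemma ideal_gen_subset_toric_ideal:
  assumes "G \<subseteq> toric_ideal A"
  shows "ideal_gen (length A) G \<subseteq> toric_ideal A"
proof
  fix p assume "p \<in> ideal_gen (length A) G"
  then show "p \<in> toric_ideal A"
    by (induction rule: ideal_gen_induct) (use assms in \<open>auto intro: toric_ideal_add toric_ideal_mult\<close>)
qed

definition generating_set :: "nat \<Rightarrow> 'k::field mpoly set \<Rightarrow> 'k mpoly set \<Rightarrow> bool" where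
  "generating_set n G I \<longleftrightarrow> finite G \<and> G \<subseteq> poly_ring n \<and> ideal_gen n G = I"

lemma Least_eq_if_mutually_bounded:
  assumes "\<And>c. P c \<Longrightarrow> \<exists>c'\<le>c. Q c'" and "\<And>c. Q c \<Longrightarrow> \<exists>c'\<le>c. P c'"
  shows "(LEAST c::nat. P c) = (LEAST c. Q c)"
proof (cases "\<exists>c. P c")
  case True
  then obtain c where "P c" by blast
  then obtain c' where "Q c'" using assms(1) by blast
  show ?thesis
  proof (rule antisym)
    obtain d where "d \<le> (LEAST c. Q c)" "P d" using assms(2) LeastI[of Q, OF \<open>Q c'\<close>] by blast
    then show "(LEAST c. P c) \<le> (LEAST c. Q c)" by (meson Least_le order_trans)
    obtain e where "e \<le> (LEAST c. P c)" "Q e" using assms(1) LeastI[of P, OF \<open>P c\<close>] by blast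
    then show "(LEAST c. Q c) \<le> (LEAST c. P c)" by (meson Least_le order_trans)
  qed
next
  case False
  hence "\<not> (\<exists>c. Q c)" using assms(2) by blast
  with False have "P = Q" by (auto simp: fun_eq_iff)
  thus ?thesis by simp
qed

lemma mu_le_if_generating_sets_bounded:
  assumes "\<And>G. generating_set n G I \<Longrightarrow> \<exists>G'. generating_set n G' J \<and> card G' \<le> card G"
    and "\<exists>G. finite G \<and> G \<subseteq> poly_ring n \<and> ideal_gen n G = I \<and> card G = c"
  shows "\<exists>c'\<le>c. \<exists>G'. finite G' \<and> G' \<subseteq> poly_ring n \<and> ideal_gen n G' = J \<and> card G' = c'"
proof -
  obtain G where "generating_set n G I" "card G = c"
    using assms(2) by (auto simp: generating_set_def)
  then obtain G' where "generating_set n G' J" "card G' \<le> c" using assms(1) by blast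
  then show ?thesis by (intro exI[of _ "card G'"]) (auto simp: generating_set_def)
qed

lemma mu_eq_if_generating_sets_bounded:
  assumes "\<And>G. generating_set n G I \<Longrightarrow> \<exists>G'. generating_set n G' J \<and> card G' \<le> card G"
    and "\<And>G. generating_set n G J \<Longrightarrow> \<exists>G'. generating_set n G' I \<and> card G' \<le> card G"
  shows "mu n I = mu n J"
  unfolding mu_def
  using mu_le_if_generating_sets_bounded[OF assms(1)] mu_le_if_generating_sets_bounded[OF assms(2)]
  by (rule Least_eq_if_mutually_bounded)

section \<open>Homogeneous components\<close>

definition filter_mons :: "(monomial \<Rightarrow> bool) \<Rightarrow> 'k::field mpoly \<Rightarrow> 'k mpoly" where
  "filter_mons P p = lin_ext (\<lambda>\<alpha> c. if P \<alpha> then Poly_Mapping.single \<alpha> c else 0) p"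

abbreviation toric_part :: "(nat \<Rightarrow> nat) list \<Rightarrow> (nat \<Rightarrow> nat) \<Rightarrow> 'k::field mpoly \<Rightarrow> 'k mpoly" where
  "toric_part A \<beta> \<equiv> filter_mons (\<lambda>\<alpha>. toric_exp A \<alpha> = \<beta>)"

definition toric_homogeneous :: "(nat \<Rightarrow> nat) list \<Rightarrow> 'k::field mpoly \<Rightarrow> bool" where
  "toric_homogeneous A p \<longleftrightarrow> (\<exists>\<beta>. \<forall>\<alpha>\<in>Poly_Mapping.keys p. toric_exp A \<alpha> = \<beta>)"

lemma lookup_filter_mons:
  "Poly_Mapping.lookup (filter_mons P p) \<alpha> = (if P \<alpha> then Poly_Mapping.lookup p \<alpha> else 0)"
proof -
  have "Poly_Mapping.lookup (filter_mons P p) \<alpha>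
      = (\<Sum>\<gamma>\<in>Poly_Mapping.keys p. if \<gamma> = \<alpha> then (if P \<alpha> then Poly_Mapping.lookup p \<alpha> else 0) else 0)"
    unfolding filter_mons_def lin_ext_def lookup_sum
    by (rule sum.cong) (auto simp: lookup_single when_def)
  also have "\<dots> = (if P \<alpha> then Poly_Mapping.lookup p \<alpha> else 0)"
    by (simp add: in_keys_iff)
  finally show ?thesis .
qed

lemma keys_filter_mons: "Poly_Mapping.keys (filter_mons P p) = {\<alpha>\<in>Poly_Mapping.keys p. P \<alpha>}"
  by (auto simp: in_keys_iff lookup_filter_mons split: if_splits)

lemma filter_mons_add: "filter_mons P (p + q) = filter_mons P p + filter_mons P q"
  unfolding filter_mons_def by (rule lin_ext_add) simp

lemma filter_mons_sum: "filter_mons P (sum f I) = (\<Sum>x\<in>I. filter_mons P (f x))"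
  unfolding filter_mons_def by (rule lin_ext_sum) simp

lemma filter_mons_cong: "(\<And>\<alpha>. P \<alpha> = P' \<alpha>) \<Longrightarrow> filter_mons P p = filter_mons P' p"
  by (metis ext)

lemma filter_mons_all: "(\<And>\<alpha>. \<alpha> \<in> Poly_Mapping.keys p \<Longrightarrow> P \<alpha>) \<Longrightarrow> filter_mons P p = p"
  by (rule poly_mapping_eqI) (auto simp: lookup_filter_mons in_keys_iff)

lemma filter_mons_none: "(\<And>\<alpha>. \<alpha> \<in> Poly_Mapping.keys p \<Longrightarrow> \<not> P \<alpha>) \<Longrightarrow> filter_mons P p = 0"
  by (rule poly_mapping_eqI) (auto simp: lookup_filter_mons in_keys_iff)

lemma filter_mons_single_mult:
  "filter_mons P (Poly_Mapping.single \<gamma> c * p)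
     = Poly_Mapping.single \<gamma> c * filter_mons (\<lambda>\<alpha>. P (\<gamma> + \<alpha>)) p"
proof -
  have "filter_mons P (Poly_Mapping.single \<gamma> c * p) = (\<Sum>\<alpha>\<in>Poly_Mapping.keys p.
      if P (\<gamma> + \<alpha>) then Poly_Mapping.single (\<gamma> + \<alpha>) (c * Poly_Mapping.lookup p \<alpha>) else 0)"
    unfolding single_times_poly_mapping filter_mons_sum
    by (simp add: filter_mons_def lin_ext_single)
  also have "\<dots> = Poly_Mapping.single \<gamma> c * (\<Sum>\<alpha>\<in>Poly_Mapping.keys p.
      if P (\<gamma> + \<alpha>) then Poly_Mapping.single \<alpha> (Poly_Mapping.lookup p \<alpha>) else 0)"
    by (simp add: sum_distrib_left mult_single if_distrib[of "\<lambda>x. _ * x"] cong: if_cong)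
  also have "\<dots> = Poly_Mapping.single \<gamma> c * filter_mons (\<lambda>\<alpha>. P (\<gamma> + \<alpha>)) p"
    unfolding filter_mons_def lin_ext_def ..
  finally show ?thesis .
qed

lemma sum_toric_parts:
  "p = (\<Sum>\<beta>\<in>toric_exp A ` Poly_Mapping.keys p. toric_part A \<beta> p)"
proof (rule poly_mapping_eqI)
  fix \<alpha>
  have "Poly_Mapping.lookup (\<Sum>\<beta>\<in>toric_exp A ` Poly_Mapping.keys p. toric_part A \<beta> p) \<alpha>
      = (\<Sum>\<beta>\<in>toric_exp A ` Poly_Mapping.keys p. if toric_exp A \<alpha> = \<beta> then Poly_Mapping.lookup p \<alpha> else 0)"
    by (simp add: lookup_sum lookup_filter_mons)
  also have "\<dots> = Poly_Mapping.lookup p \<alpha>"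
    by (cases "\<alpha> \<in> Poly_Mapping.keys p") (auto simp: in_keys_iff)
  finally show "Poly_Mapping.lookup p \<alpha>
      = Poly_Mapping.lookup (\<Sum>\<beta>\<in>toric_exp A ` Poly_Mapping.keys p. toric_part A \<beta> p) \<alpha>"
    by simp
qed

lemma toric_homogeneous_toric_part: "toric_homogeneous A (toric_part A \<beta> p)"
  unfolding toric_homogeneous_def by (auto simp: keys_filter_mons)

lemma toric_part_of_homogeneous:
  assumes "toric_homogeneous A p"
  shows "toric_part A \<beta> p = p \<or> toric_part A \<beta> p = 0"
proof -
  obtain \<gamma> where \<gamma>: "\<And>\<alpha>. \<alpha> \<in> Poly_Mapping.keys p \<Longrightarrow> toric_exp A \<alpha> = \<gamma>"
    using assms unfolding toric_homogeneous_def by blast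
  show ?thesis
  proof (cases "\<gamma> = \<beta>")
    case True
    then show ?thesis using \<gamma> filter_mons_all[of p "\<lambda>\<alpha>. toric_exp A \<alpha> = \<beta>"] by blast
  next
    case False
    then show ?thesis using \<gamma> filter_mons_none[of p "\<lambda>\<alpha>. toric_exp A \<alpha> = \<beta>"] by blast
  qed
qed

lemma toric_image_coeff_filter_mons:
  "toric_image_coeff A (filter_mons (\<lambda>\<alpha>. Q (toric_exp A \<alpha>)) p) \<beta>
     = (if Q \<beta> then toric_image_coeff A p \<beta> else 0)"
proof -
  have "toric_image_coeff A (filter_mons (\<lambda>\<alpha>. Q (toric_exp A \<alpha>)) p) \<beta>
     = (\<Sum>\<alpha>\<in>Poly_Mapping.keys p. if Q \<beta> then (if toric_exp A \<alpha> = \<beta> then Poly_Mapping.lookup p \<alpha> else 0) else 0)"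
    unfolding filter_mons_def toric_image_coeff_lin_ext
    by (rule sum.cong) (auto simp: toric_image_coeff_single)
  also have "\<dots> = (if Q \<beta> then toric_image_coeff A p \<beta> else 0)"
    by (simp add: toric_image_coeff_altdef)
  finally show ?thesis .
qed

lemma poly_ring_filter_mons: "p \<in> poly_ring n \<Longrightarrow> filter_mons P p \<in> poly_ring n"
  by (auto simp: in_poly_ring keys_filter_mons)

lemma toric_ideal_filter_mons:
  "p \<in> toric_ideal A \<Longrightarrow> filter_mons (\<lambda>\<alpha>. Q (toric_exp A \<alpha>)) p \<in> toric_ideal A"
  by (simp add: in_toric_ideal poly_ring_filter_mons toric_image_coeff_filter_mons)

lemma toric_ideal_toric_part: "p \<in> toric_ideal A \<Longrightarrow> toric_part A \<beta> p \<in> toric_ideal A"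
  using toric_ideal_filter_mons[of p A "\<lambda>x. x = \<beta>"] by simp

definition toric_parts :: "(nat \<Rightarrow> nat) list \<Rightarrow> 'k::field mpoly \<Rightarrow> 'k mpoly set" where
  "toric_parts A p = (\<lambda>\<beta>. toric_part A \<beta> p) ` toric_exp A ` Poly_Mapping.keys p"

lemma finite_toric_parts: "finite (toric_parts A p)"
  by (simp add: toric_parts_def)

lemma toric_parts_subset_toric_ideal: "p \<in> toric_ideal A \<Longrightarrow> toric_parts A p \<subseteq> toric_ideal A"
  by (auto simp: toric_parts_def toric_ideal_toric_part)

lemma toric_homogeneous_toric_parts: "h \<in> toric_parts A p \<Longrightarrow> toric_homogeneous A h"
  by (auto simp: toric_parts_def toric_homogeneous_toric_part)

lemma ideal_gen_if_toric_parts_subset: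
  assumes "toric_parts A p \<subseteq> G"
  shows "p \<in> ideal_gen n G"
proof -
  have "(\<Sum>\<beta>\<in>toric_exp A ` Poly_Mapping.keys p. toric_part A \<beta> p) \<in> ideal_gen n G"
    using assms by (intro ideal_gen_sum ideal_gen_base) (auto simp: toric_parts_def)
  then show ?thesis by (simp flip: sum_toric_parts)
qed

lemma toric_ideal_subset_if_toric_parts:
  fixes G :: "'k::field mpoly set"
  assumes "\<And>\<beta> p. p \<in> toric_ideal A \<Longrightarrow> toric_part A \<beta> p \<in> ideal_gen n G"
  shows "toric_ideal A \<subseteq> ideal_gen n G"
proof
  fix p :: "'k mpoly" assume "p \<in> toric_ideal A"
  then have "(\<Sum>\<beta>\<in>toric_exp A ` Poly_Mapping.keys p. toric_part A \<beta> p) \<in> ideal_gen n G"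
    by (intro ideal_gen_sum assms)
  then show "p \<in> ideal_gen n G" by (simp flip: sum_toric_parts)
qed

section \<open>The index \<open>B\<^sub>i\<close>\<close>

definition mult_in_lattice_of_others :: "(nat \<Rightarrow> nat) list \<Rightarrow> nat \<Rightarrow> int \<Rightarrow> bool" where
  "mult_in_lattice_of_others A i c \<longleftrightarrow> (\<exists>z::nat \<Rightarrow> int. \<forall>l.
      c * int ((A ! i) l) = (\<Sum>j\<in>{..<length A} - {i}. z j * int ((A ! j) l)))"

lemma B_index_altdef: "B_index A i = (LEAST b. b > 0 \<and> mult_in_lattice_of_others A i (int b))"
  unfolding B_index_def mult_in_lattice_of_others_def ..

lemma mult_in_lattice_of_others_lincomb:
  assumes "mult_in_lattice_of_others A i c" "mult_in_lattice_of_others A i c'"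
  shows "mult_in_lattice_of_others A i (x * c + y * c')"
proof -
  obtain z z' where
    z: "\<And>l. c * int ((A ! i) l) = (\<Sum>j\<in>{..<length A} - {i}. z j * int ((A ! j) l))" and
    z': "\<And>l. c' * int ((A ! i) l) = (\<Sum>j\<in>{..<length A} - {i}. z' j * int ((A ! j) l))"
    using assms unfolding mult_in_lattice_of_others_def by blast
  have "(x * c + y * c') * int ((A ! i) l)
      = (\<Sum>j\<in>{..<length A} - {i}. (x * z j + y * z' j) * int ((A ! j) l))" for l
  proof -
    have "(x * c + y * c') * int ((A ! i) l) = x * (c * int ((A ! i) l)) + y * (c' * int ((A ! i) l))"
      by (simp add: algebra_simps)
    also have "\<dots> = (\<Sum>j\<in>{..<length A} - {i}. (x * z j + y * z' j) * int ((A ! j) l))"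
      unfolding z z' by (simp add: sum_distrib_left sum.distrib algebra_simps)
    finally show ?thesis .
  qed
  then show ?thesis
    unfolding mult_in_lattice_of_others_def by (intro exI[of _ "\<lambda>j. x * z j + y * z' j"]) blast
qed

text \<open>The multiples \<open>c\<close> with \<open>c a\<^sub>i \<in> \<Sum>\<^sub>j\<^sub>\<noteq>\<^sub>i \<int> a\<^sub>j\<close> form a subgroup of \<open>\<int>\<close>, generated by its
  least positive element \<open>B\<^sub>i\<close>.\<close>

lemma B_index_dvd:
  assumes c: "mult_in_lattice_of_others A i c"
  shows "int (B_index A i) dvd c"
proof (cases "c = 0")
  case False
  let ?P = "\<lambda>b. b > 0 \<and> mult_in_lattice_of_others A i (int b)"
  have "sgn c * c + 0 * c = \<bar>c\<bar>" by (simp add: abs_sgn mult.commute)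
  then have "mult_in_lattice_of_others A i \<bar>c\<bar>"
    using mult_in_lattice_of_others_lincomb[OF c c, of "sgn c" 0] by metis
  with False have "?P (nat \<bar>c\<bar>)" by simp
  then have "?P (B_index A i)" unfolding B_index_altdef by (rule LeastI)
  define B where "B = int (B_index A i)"
  have B: "B > 0" "mult_in_lattice_of_others A i B" using \<open>?P (B_index A i)\<close> by (auto simp: B_def)
  have "c mod B = 1 * c + (- (c div B)) * B" by (simp add: minus_div_mult_eq_mod[symmetric])
  then have r: "mult_in_lattice_of_others A i (c mod B)"
    using mult_in_lattice_of_others_lincomb[OF c B(2)] by metis
  have "c mod B = 0"
  proof (rule ccontr)
    assume "c mod B \<noteq> 0"
    with B(1) have "c mod B > 0" by (simp add: order_neq_le_trans)
    with r have "?P (nat (c mod B))" by simp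
    then have "B_index A i \<le> nat (c mod B)" unfolding B_index_altdef by (rule Least_le)
    then have "B \<le> c mod B" using \<open>c mod B > 0\<close> unfolding B_def by (simp add: le_nat_iff)
    with pos_mod_bound[OF B(1), of c] show False by linarith
  qed
  then show ?thesis by (simp add: B_def dvd_eq_mod_eq_0)
qed simp

section \<open>Rescaling one vector\<close>

definition var_pow :: "nat \<Rightarrow> nat \<Rightarrow> 'k::comm_semiring_1 mpoly" where
  "var_pow l e = Poly_Mapping.single (Poly_Mapping.single l e) 1"

locale rescaling =
  fixes A :: "(nat \<Rightarrow> nat) list" and i b :: nat
  assumes i_less: "i < length A" and b_pos: "b > 0" and b_dvd: "b dvd B_index A i"
begin

definition A' where "A' = A[i := (\<lambda>l. b * (A ! i) l)]"

lemma length_A' [simp]: "length A' = length A"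
  by (simp add: A'_def)

lemma nth_A': "j < length A \<Longrightarrow> A' ! j = (if j = i then (\<lambda>l. b * (A ! i) l) else A ! j)"
  by (simp add: A'_def nth_list_update)

lemma lookup_i_mod_eq_if_toric_exp_eq:
  assumes "toric_exp A \<alpha> = toric_exp A \<alpha>'"
  shows "Poly_Mapping.lookup \<alpha> i mod b = Poly_Mapping.lookup \<alpha>' i mod b"
proof -
  let ?J = "{..<length A} - {i}"
  define c where "c = int (Poly_Mapping.lookup \<alpha> i) - int (Poly_Mapping.lookup \<alpha>' i)"
  define z where "z j = int (Poly_Mapping.lookup \<alpha>' j) - int (Poly_Mapping.lookup \<alpha> j)" for j
  have split: "(\<Sum>j<length A. f j) = f i + (\<Sum>j\<in>?J. f j)" for f :: "nat \<Rightarrow> int"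
    using i_less by (simp add: sum.remove)
  have "c * int ((A ! i) l) = (\<Sum>j\<in>?J. z j * int ((A ! j) l))" for l
  proof -
    have "int (toric_exp A \<alpha> l) = int (toric_exp A \<alpha>' l)" using assms by simp
    then have "(\<Sum>j<length A. int (Poly_Mapping.lookup \<alpha> j) * int ((A ! j) l))
             = (\<Sum>j<length A. int (Poly_Mapping.lookup \<alpha>' j) * int ((A ! j) l))"
      unfolding toric_exp_def by simp
    then show ?thesis unfolding split c_def z_def by (simp add: algebra_simps sum_subtractf)
  qed
  then have "int (B_index A i) dvd c"
    by (intro B_index_dvd) (auto simp: mult_in_lattice_of_others_def)
  then have "int b dvd c" using b_dvd by (meson dvd_trans int_dvd_int_iff)
  then have "int (Poly_Mapping.lookup \<alpha> i) mod int b = int (Poly_Mapping.lookup \<alpha>' i) mod int b"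
    unfolding c_def by (simp add: mod_eq_dvd_iff)
  then show ?thesis by (simp flip: zmod_int)
qed

definition stretch_mon :: "monomial \<Rightarrow> monomial" where
  "stretch_mon \<alpha> = Poly_Mapping.update i (b * Poly_Mapping.lookup \<alpha> i) \<alpha>"

definition shrink_mon :: "monomial \<Rightarrow> monomial" where
  "shrink_mon \<alpha> = Poly_Mapping.update i (Poly_Mapping.lookup \<alpha> i div b) \<alpha>"

lemma lookup_stretch_mon: "Poly_Mapping.lookup (stretch_mon \<alpha>) j
    = (if j = i then b * Poly_Mapping.lookup \<alpha> i else Poly_Mapping.lookup \<alpha> j)"
  by (simp add: stretch_mon_def lookup_update)

lemma lookup_shrink_mon: "Poly_Mapping.lookup (shrink_mon \<alpha>) j
    = (if j = i then Poly_Mapping.lookup \<alpha> i div b else Poly_Mapping.lookup \<alpha> j)"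
  by (simp add: shrink_mon_def lookup_update)

lemma keys_update_subset:
  "Poly_Mapping.keys \<alpha> \<subseteq> {..<length A} \<Longrightarrow> Poly_Mapping.keys (Poly_Mapping.update i v \<alpha>) \<subseteq> {..<length A}"
  using i_less by (auto simp: keys_update)

lemma stretch_mon_add: "stretch_mon (\<alpha> + \<beta>) = stretch_mon \<alpha> + stretch_mon \<beta>"
  by (rule poly_mapping_eqI) (simp add: lookup_stretch_mon lookup_add algebra_simps)

lemma shrink_mon_add_stretch_mon: "shrink_mon (\<alpha> + stretch_mon \<beta>) = shrink_mon \<alpha> + \<beta>"
  by (rule poly_mapping_eqI) (use b_pos in \<open>simp add: lookup_shrink_mon lookup_stretch_mon lookup_add\<close>)

lemma dvd_lookup_add_stretch_mon:
  "b dvd Poly_Mapping.lookup (\<alpha> + stretch_mon \<beta>) i \<longleftrightarrow> b dvd Poly_Mapping.lookup \<alpha> i"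
  by (simp add: lookup_add lookup_stretch_mon) (metis dvd_add_times_triv_right_iff mult.commute)

lemma shrink_mon_zero [simp]: "shrink_mon 0 = 0"
  by (rule poly_mapping_eqI) (simp add: lookup_shrink_mon)

lemma toric_exp_stretch_mon: "toric_exp A (stretch_mon \<alpha>) = toric_exp A' \<alpha>"
  unfolding toric_exp_def
  by (rule ext, rule sum.cong) (auto simp: lookup_stretch_mon nth_A')

lemma single_add_stretch_mon:
  assumes "Poly_Mapping.lookup \<alpha> i mod b = r"
  shows "Poly_Mapping.single i r
      + stretch_mon (Poly_Mapping.update i ((Poly_Mapping.lookup \<alpha> i - r) div b) \<alpha>) = \<alpha>"
proof (rule poly_mapping_eqI)
  fix j
  have "r + b * ((Poly_Mapping.lookup \<alpha> i - r) div b) = Poly_Mapping.lookup \<alpha> i"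
    using assms by (metis add_diff_cancel_left' div_mult_mod_eq mult.commute nonzero_mult_div_cancel_left
        b_pos not_gr_zero add.commute)
  then show "Poly_Mapping.lookup (Poly_Mapping.single i r
      + stretch_mon (Poly_Mapping.update i ((Poly_Mapping.lookup \<alpha> i - r) div b) \<alpha>)) j
    = Poly_Mapping.lookup \<alpha> j"
    by (cases "j = i") (simp_all add: lookup_add lookup_single lookup_stretch_mon lookup_update when_def)
qed

text \<open>\<open>stretch\<close> is the substitution \<open>\<phi>\<close>: \<open>x\<^sub>i \<mapsto> x\<^sub>i\<^sup>b\<close>, and \<open>shrink\<close> is its left inverse \<open>\<rho>\<close>.\<close>

definition stretch :: "'k::field mpoly \<Rightarrow> 'k mpoly" where
  "stretch p = lin_ext (\<lambda>\<alpha> c. Poly_Mapping.single (stretch_mon \<alpha>) c) p"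

definition shrink :: "'k::field mpoly \<Rightarrow> 'k mpoly" where
  "shrink p = lin_ext (\<lambda>\<alpha> c. if b dvd Poly_Mapping.lookup \<alpha> i
                              then Poly_Mapping.single (shrink_mon \<alpha>) c else 0) p"

lemma stretch_zero [simp]: "stretch 0 = 0"
  by (simp add: stretch_def)

lemma stretch_add: "stretch (p + q) = stretch p + stretch q"
  unfolding stretch_def by (rule lin_ext_add) simp

lemma stretch_mult: "stretch (p * q) = stretch p * stretch q"
proof -
  have "stretch (p * q) = (\<Sum>\<alpha>\<in>Poly_Mapping.keys p. \<Sum>\<beta>\<in>Poly_Mapping.keys q.
      Poly_Mapping.single (stretch_mon (\<alpha> + \<beta>)) (Poly_Mapping.lookup p \<alpha> * Poly_Mapping.lookup q \<beta>))"
    unfolding stretch_def by (rule lin_ext_mult) simp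
  also have "\<dots> = stretch p * stretch q"
    unfolding stretch_def lin_ext_def by (simp add: sum_product mult_single stretch_mon_add)
  finally show ?thesis .
qed

lemma toric_image_coeff_stretch: "toric_image_coeff A (stretch p) \<beta> = toric_image_coeff A' p \<beta>"
  unfolding stretch_def toric_image_coeff_lin_ext toric_image_coeff_single toric_exp_stretch_mon
    toric_image_coeff_altdef[of A' p] ..

lemma poly_ring_stretch: "p \<in> poly_ring (length A) \<Longrightarrow> stretch p \<in> poly_ring (length A)"
  unfolding stretch_def stretch_mon_def
  by (intro poly_ring_lin_ext poly_ring_single keys_update_subset) (auto simp: in_poly_ring)

lemma toric_ideal_stretch: "q \<in> toric_ideal A' \<Longrightarrow> stretch q \<in> toric_ideal A"
  by (simp add: in_toric_ideal poly_ring_stretch toric_image_coeff_stretch)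

lemma shrink_single: "shrink (Poly_Mapping.single \<gamma> c)
    = (if b dvd Poly_Mapping.lookup \<gamma> i then Poly_Mapping.single (shrink_mon \<gamma>) c else 0)"
  unfolding shrink_def by (rule lin_ext_single) simp

lemma shrink_zero [simp]: "shrink 0 = 0"
  by (simp add: shrink_def)

lemma shrink_add: "shrink (p + q) = shrink p + shrink q"
  unfolding shrink_def by (rule lin_ext_add) simp

lemma shrink_mult_stretch: "shrink (f * stretch g) = shrink f * g"
proof -
  have "f * stretch g = (\<Sum>\<alpha>\<in>Poly_Mapping.keys f. \<Sum>\<beta>\<in>Poly_Mapping.keys g.
       Poly_Mapping.single (\<alpha> + stretch_mon \<beta>) (Poly_Mapping.lookup f \<alpha> * Poly_Mapping.lookup g \<beta>))"
    by (subst poly_mapping_sum_single[of f])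
       (simp add: stretch_def lin_ext_def sum_product mult_single)
  then have "shrink (f * stretch g) = (\<Sum>\<alpha>\<in>Poly_Mapping.keys f. \<Sum>\<beta>\<in>Poly_Mapping.keys g.
       shrink (Poly_Mapping.single (\<alpha> + stretch_mon \<beta>) (Poly_Mapping.lookup f \<alpha> * Poly_Mapping.lookup g \<beta>)))"
    unfolding shrink_def by (simp add: lin_ext_sum)
  also have "\<dots> = (\<Sum>\<alpha>\<in>Poly_Mapping.keys f. \<Sum>\<beta>\<in>Poly_Mapping.keys g.
       (if b dvd Poly_Mapping.lookup \<alpha> i then Poly_Mapping.single (shrink_mon \<alpha>) (Poly_Mapping.lookup f \<alpha>) else 0)
       * Poly_Mapping.single \<beta> (Poly_Mapping.lookup g \<beta>))"
    by (intro sum.cong refl)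
       (simp add: shrink_single dvd_lookup_add_stretch_mon shrink_mon_add_stretch_mon mult_single)
  also have "\<dots> = shrink f * g"
    by (subst (3) poly_mapping_sum_single[of g])
       (simp add: shrink_def lin_ext_def sum_product)
  finally show ?thesis .
qed

lemma shrink_stretch: "shrink (stretch q) = (q::'k::field mpoly)"
proof -
  have "shrink (1::'k::field mpoly) = 1" using shrink_single[of 0 1] by simp
  then show ?thesis using shrink_mult_stretch[of 1 q] by simp
qed

lemma poly_ring_shrink: "p \<in> poly_ring (length A) \<Longrightarrow> shrink p \<in> poly_ring (length A)"
  unfolding shrink_def shrink_mon_def
  by (rule poly_ring_lin_ext) (auto intro!: poly_ring_single keys_update_subset simp: in_poly_ring)

lemma poly_ring_var_pow: "var_pow i r \<in> poly_ring (length A)"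
  unfolding var_pow_def by (rule poly_ring_single) (use i_less in auto)

end

context rescaling begin

lemma toric_homogeneous_factor:
  fixes p :: "'k::field mpoly"
  assumes p: "p \<in> toric_ideal A" and hom: "toric_homogeneous A p"
  obtains r q where "q \<in> toric_ideal A'" and "p = var_pow i r * stretch q"
proof (cases "p = 0")
  case True
  then show ?thesis using that[of 0 0] by simp
next
  case False
  then obtain \<alpha>\<^sub>0 where \<alpha>\<^sub>0: "\<alpha>\<^sub>0 \<in> Poly_Mapping.keys p" by fastforce
  obtain \<beta> where \<beta>: "\<And>\<alpha>. \<alpha> \<in> Poly_Mapping.keys p \<Longrightarrow> toric_exp A \<alpha> = \<beta>"
    using hom unfolding toric_homogeneous_def by blast
  define r where "r = Poly_Mapping.lookup \<alpha>\<^sub>0 i mod b"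
  define shift where "shift \<alpha> = Poly_Mapping.update i ((Poly_Mapping.lookup \<alpha> i - r) div b) \<alpha>" for \<alpha>
  define q where "q = lin_ext (\<lambda>\<alpha> c. Poly_Mapping.single (shift \<alpha>) c) p"
  have decomp: "Poly_Mapping.single i r + stretch_mon (shift \<alpha>) = \<alpha>"
    if "\<alpha> \<in> Poly_Mapping.keys p" for \<alpha>
    unfolding shift_def r_def
    by (rule single_add_stretch_mon, rule lookup_i_mod_eq_if_toric_exp_eq) (simp add: \<beta> that \<alpha>\<^sub>0)
  have "var_pow i r * stretch q = (\<Sum>\<alpha>\<in>Poly_Mapping.keys p.
      Poly_Mapping.single (Poly_Mapping.single i r + stretch_mon (shift \<alpha>)) (Poly_Mapping.lookup p \<alpha>))"
    unfolding var_pow_def stretch_def q_def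
    by (simp add: lin_ext_lin_ext lin_ext_single sum_distrib_left mult_single)
  also have "\<dots> = (\<Sum>\<alpha>\<in>Poly_Mapping.keys p. Poly_Mapping.single \<alpha> (Poly_Mapping.lookup p \<alpha>))"
    by (rule sum.cong) (simp_all add: decomp)
  also have "\<dots> = p" by (rule poly_mapping_sum_single[symmetric])
  finally have factor: "p = var_pow i r * stretch q" ..
  have q_ring: "q \<in> poly_ring (length A)"
    using p unfolding q_def shift_def in_toric_ideal
    by (intro poly_ring_lin_ext poly_ring_single keys_update_subset) (auto simp: in_poly_ring)
  define \<delta> where "\<delta> l = \<beta> l - r * (A ! i) l" for l
  have deg_shift: "toric_exp A' (shift \<alpha>) = \<delta>" if "\<alpha> \<in> Poly_Mapping.keys p" for \<alpha>
  proof
    fix l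
    have "\<beta> l = toric_exp A (Poly_Mapping.single i r + stretch_mon (shift \<alpha>)) l"
      using \<beta> decomp that by simp
    also have "\<dots> = r * (A ! i) l + toric_exp A' (shift \<alpha>) l"
      by (simp add: toric_exp_add toric_exp_single i_less toric_exp_stretch_mon)
    finally show "toric_exp A' (shift \<alpha>) l = \<delta> l" unfolding \<delta>_def by simp
  qed
  have "toric_image_coeff A' q \<beta>' = 0" for \<beta>'
  proof -
    have "toric_image_coeff A' q \<beta>'
        = (\<Sum>\<alpha>\<in>Poly_Mapping.keys p. if \<delta> = \<beta>' then Poly_Mapping.lookup p \<alpha> else 0)"
      unfolding q_def toric_image_coeff_lin_ext toric_image_coeff_single
      by (rule sum.cong) (simp_all add: deg_shift)
    also have "\<dots> = (if \<delta> = \<beta>' then toric_image_coeff A p \<beta> else 0)"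
      by (simp add: toric_image_coeff_altdef \<beta>)
    also have "\<dots> = 0" using p by (simp add: in_toric_ideal)
    finally show ?thesis .
  qed
  with q_ring have "q \<in> toric_ideal A'" by (simp add: in_toric_ideal)
  then show ?thesis using factor by (rule that)
qed

lemma ideal_gen_stretch:
  "q \<in> ideal_gen (length A) G \<Longrightarrow> stretch q \<in> ideal_gen (length A) (stretch ` G)"
  by (induction rule: ideal_gen_induct)
     (auto simp: stretch_add stretch_mult intro: ideal_gen_add ideal_gen_mult poly_ring_stretch ideal_gen_base)

lemma generating_set_stretch_image:
  fixes G' :: "'k::field mpoly set"
  assumes G': "generating_set (length A) G' (toric_ideal A')"
  shows "generating_set (length A) (stretch ` G') (toric_ideal A)"
proof -
  have "G' \<subseteq> toric_ideal A'" using G' ideal_gen_base unfolding generating_set_def by blast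
  then have "ideal_gen (length A) (stretch ` G') \<subseteq> toric_ideal A"
    by (intro ideal_gen_subset_toric_ideal) (auto intro: toric_ideal_stretch)
  moreover have "toric_ideal A \<subseteq> ideal_gen (length A) (stretch ` G')"
  proof (rule toric_ideal_subset_if_toric_parts)
    fix p :: "'k mpoly" and \<beta> assume "p \<in> toric_ideal A"
    then obtain r q where q: "q \<in> toric_ideal A'" and eq: "toric_part A \<beta> p = var_pow i r * stretch q"
      by (metis toric_homogeneous_factor toric_ideal_toric_part toric_homogeneous_toric_part)
    have "q \<in> ideal_gen (length A) G'" using q G' by (simp add: generating_set_def)
    then show "toric_part A \<beta> p \<in> ideal_gen (length A) (stretch ` G')"
      unfolding eq by (intro ideal_gen_mult poly_ring_var_pow ideal_gen_stretch)
  qed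
  ultimately show ?thesis using G' by (auto simp: generating_set_def intro: poly_ring_stretch)
qed

end

section \<open>Graded Nakayama for toric ideals\<close>

abbreviation var :: "nat \<Rightarrow> 'k::comm_semiring_1 mpoly" where
  "var l \<equiv> var_pow l 1"

definition cmult :: "'k::field \<Rightarrow> 'k mpoly \<Rightarrow> 'k mpoly" where
  "cmult c p = Poly_Mapping.single 0 c * p"

interpretation mpoly: vector_space "cmult :: 'k::field \<Rightarrow> 'k mpoly \<Rightarrow> 'k mpoly"
  by unfold_locales
     (simp_all add: cmult_def distrib_left single_add distrib_right mult_single flip: mult.assoc)

text \<open>\<open>max_ideal_mult n I\<close> is the product \<open>\<frak>m I\<close> with the ideal \<open>\<frak>m = (x\<^sub>1, \<dots>, x\<^sub>n)\<close>.\<close>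

definition max_ideal_mult :: "nat \<Rightarrow> 'k::field mpoly set \<Rightarrow> 'k mpoly set" where
  "max_ideal_mult n I = {p. \<exists>q. (\<forall>l<n. q l \<in> I) \<and> p = (\<Sum>l<n. var l * q l)}"

lemma poly_ring_var: "l < n \<Longrightarrow> var l \<in> poly_ring n"
  unfolding var_pow_def by (rule poly_ring_single) auto

lemma toric_ideal_cmult: "p \<in> toric_ideal A \<Longrightarrow> cmult c p \<in> toric_ideal A"
  unfolding cmult_def by (rule toric_ideal_mult[OF poly_ring_single]) auto

lemma ideal_gen_cmult: "p \<in> ideal_gen n G \<Longrightarrow> cmult c p \<in> ideal_gen n G"
  unfolding cmult_def by (rule ideal_gen_mult[OF poly_ring_single]) auto

lemma max_ideal_mult_zero: "0 \<in> max_ideal_mult n (toric_ideal A)"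
  unfolding max_ideal_mult_def by (intro CollectI exI[of _ "\<lambda>_. 0"]) simp

lemma max_ideal_mult_add:
  assumes "p \<in> max_ideal_mult n (toric_ideal A)" "q \<in> max_ideal_mult n (toric_ideal A)"
  shows "p + q \<in> max_ideal_mult n (toric_ideal A)"
proof -
  obtain q1 q2 where q: "\<forall>l<n. q1 l \<in> toric_ideal A" "p = (\<Sum>l<n. var l * q1 l)"
     "\<forall>l<n. q2 l \<in> toric_ideal A" "q = (\<Sum>l<n. var l * q2 l)"
    using assms unfolding max_ideal_mult_def by blast
  have "p + q = (\<Sum>l<n. var l * (q1 l + q2 l))" using q by (simp add: distrib_left sum.distrib)
  moreover have "\<forall>l<n. q1 l + q2 l \<in> toric_ideal A" using q by (simp add: toric_ideal_add)
  ultimately show ?thesis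
    unfolding max_ideal_mult_def by (intro CollectI exI[of _ "\<lambda>l. q1 l + q2 l"]) simp
qed

lemma max_ideal_mult_cmult:
  assumes "p \<in> max_ideal_mult n (toric_ideal A)"
  shows "cmult c p \<in> max_ideal_mult n (toric_ideal A)"
proof -
  obtain q where q: "\<forall>l<n. q l \<in> toric_ideal A" "p = (\<Sum>l<n. var l * q l)"
    using assms unfolding max_ideal_mult_def by blast
  have "cmult c p = (\<Sum>l<n. var l * cmult c (q l))"
    using q by (simp add: cmult_def sum_distrib_left mult.left_commute)
  moreover have "\<forall>l<n. cmult c (q l) \<in> toric_ideal A" using q by (simp add: toric_ideal_cmult)
  ultimately show ?thesis
    unfolding max_ideal_mult_def by (intro CollectI exI[of _ "\<lambda>l. cmult c (q l)"]) simp
qed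

lemma subspace_max_ideal_mult: "mpoly.subspace (max_ideal_mult n (toric_ideal A))"
  by (rule mpoly.subspaceI) (simp_all add: max_ideal_mult_zero max_ideal_mult_add max_ideal_mult_cmult)

lemma single_eq_const_plus_vars:
  assumes "Poly_Mapping.keys \<alpha> \<subseteq> {..<n}"
  obtains c s where "\<forall>l<n. s l \<in> poly_ring n"
    and "Poly_Mapping.single \<alpha> (d::'k::field) = Poly_Mapping.single 0 c + (\<Sum>l<n. var l * s l)"
proof (cases "\<alpha> = 0")
  case True
  then show ?thesis using that[of "\<lambda>_. 0" d] by simp
next
  case False
  then obtain l where l: "l \<in> Poly_Mapping.keys \<alpha>" by (metis keys_eq_empty ex_in_conv)
  hence "l < n" using assms by auto
  define \<alpha>' where "\<alpha>' = Poly_Mapping.update l (Poly_Mapping.lookup \<alpha> l - 1) \<alpha>"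
  have "Poly_Mapping.single l 1 + \<alpha>' = \<alpha>"
    by (rule poly_mapping_eqI)
       (use l in \<open>auto simp: \<alpha>'_def lookup_add lookup_update lookup_single when_def in_keys_iff\<close>)
  define s where "s j = (if j = l then Poly_Mapping.single \<alpha>' d else 0)" for j
  have "Poly_Mapping.keys \<alpha>' \<subseteq> {..<n}"
    using assms \<open>l < n\<close> by (auto simp: \<alpha>'_def keys_update)
  then have s_ring: "\<forall>j<n. s j \<in> poly_ring n" by (simp add: s_def poly_ring_single)
  from \<open>Poly_Mapping.single l 1 + \<alpha>' = \<alpha>\<close>
  have "Poly_Mapping.single \<alpha> d = var l * Poly_Mapping.single \<alpha>' d"
    by (simp add: var_pow_def mult_single)
  also have "\<dots> = Poly_Mapping.single 0 0 + (\<Sum>j<n. var j * s j)"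
    using \<open>l < n\<close> by (simp add: s_def if_distrib[of "\<lambda>x. _ * x"] cong: if_cong)
  finally show ?thesis using that[of s 0] s_ring by blast
qed

lemma poly_ring_eq_const_plus_vars:
  assumes "(r::'k::field mpoly) \<in> poly_ring n"
  obtains c s where "\<forall>l<n. s l \<in> poly_ring n" and "r = Poly_Mapping.single 0 c + (\<Sum>l<n. var l * s l)"
proof -
  define D where "D = {r::'k mpoly. \<exists>c s. (\<forall>l<n. s l \<in> poly_ring n)
                                        \<and> r = Poly_Mapping.single 0 c + (\<Sum>l<n. var l * s l)}"
  have D_add: "p + q \<in> D" if p: "p \<in> D" and q: "q \<in> D" for p q
  proof -
    obtain c1 s1 where 1: "\<forall>l<n. s1 l \<in> poly_ring n" "p = Poly_Mapping.single 0 c1 + (\<Sum>l<n. var l * s1 l)"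
      using p unfolding D_def by blast
    obtain c2 s2 where 2: "\<forall>l<n. s2 l \<in> poly_ring n" "q = Poly_Mapping.single 0 c2 + (\<Sum>l<n. var l * s2 l)"
      using q unfolding D_def by blast
    have "p + q = Poly_Mapping.single 0 (c1 + c2) + (\<Sum>l<n. var l * (s1 l + s2 l))"
      unfolding 1(2) 2(2) single_add by (simp add: distrib_left sum.distrib ac_simps)
    moreover have "\<forall>l<n. s1 l + s2 l \<in> poly_ring n" using 1 2 by (simp add: poly_ring_add)
    ultimately show ?thesis
      unfolding D_def by (intro CollectI exI[of _ "c1 + c2"] exI[of _ "\<lambda>l. s1 l + s2 l"]) simp
  qed
  have "(\<Sum>\<alpha>\<in>K. Poly_Mapping.single \<alpha> (Poly_Mapping.lookup r \<alpha>)) \<in> D"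
    if "K \<subseteq> Poly_Mapping.keys r" for K
    using finite_subset[OF that finite_keys] that
  proof (induction K)
    case empty
    then show ?case unfolding D_def by (intro CollectI exI[of _ 0] exI[of _ "\<lambda>_. 0"]) simp
  next
    case (insert \<alpha> K)
    have "Poly_Mapping.keys \<alpha> \<subseteq> {..<n}" using assms insert by (auto simp: in_poly_ring)
    then have "Poly_Mapping.single \<alpha> (Poly_Mapping.lookup r \<alpha>) \<in> D"
      unfolding D_def by (rule single_eq_const_plus_vars) blast
    with insert show ?case by (simp add: D_add)
  qed
  then have "r \<in> D" by (subst poly_mapping_sum_single) simp
  then show ?thesis using that unfolding D_def by blast
qed

lemma ideal_gen_mod_max_ideal_mult:
  fixes G :: "'k::field mpoly set"
  assumes G: "G \<subseteq> toric_ideal A" and p: "p \<in> ideal_gen (length A) G"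
  shows "\<exists>s\<in>mpoly.span G. p - s \<in> max_ideal_mult (length A) (toric_ideal A)"
  using p
proof (induction rule: ideal_gen_induct)
  case zero
  show ?case by (intro bexI[of _ 0]) (simp_all add: max_ideal_mult_zero mpoly.span_zero)
next
  case (add p q)
  then obtain s1 s2 where s: "s1 \<in> mpoly.span G" "p - s1 \<in> max_ideal_mult (length A) (toric_ideal A)"
    "s2 \<in> mpoly.span G" "q - s2 \<in> max_ideal_mult (length A) (toric_ideal A)" by blast
  have "(p + q) - (s1 + s2) = (p - s1) + (q - s2)" by simp
  then have "(p + q) - (s1 + s2) \<in> max_ideal_mult (length A) (toric_ideal A)"
    using max_ideal_mult_add[OF s(2) s(4)] by metis
  then show ?case by (intro bexI[of _ "s1 + s2"] mpoly.span_add s(1) s(3))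
next
  case (mult r g)
  obtain c s where cs: "\<forall>l<length A. s l \<in> poly_ring (length A)"
    "r = Poly_Mapping.single 0 c + (\<Sum>l<length A. var l * s l)"
    using poly_ring_eq_const_plus_vars[OF mult(1)] by blast
  have "r * g - cmult c g = (\<Sum>l<length A. var l * (s l * g))"
    unfolding cs(2) by (simp add: cmult_def distrib_right sum_distrib_right mult.assoc)
  moreover have "\<forall>l<length A. s l * g \<in> toric_ideal A"
    using cs(1) mult(2) G by (auto intro: toric_ideal_mult)
  ultimately have "r * g - cmult c g \<in> max_ideal_mult (length A) (toric_ideal A)"
    unfolding max_ideal_mult_def by (intro CollectI exI[of _ "\<lambda>l. s l * g"]) simp
  moreover have "cmult c g \<in> mpoly.span G" by (intro mpoly.span_scale mpoly.span_base mult(2))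
  ultimately show ?case by blast
qed

lemma toric_part_var_mult:
  assumes "l < length A"
  shows "toric_part A \<beta> (var l * q)
    = (if A ! l \<le> \<beta> then var l * toric_part A (\<beta> - A ! l) q else 0)"
proof -
  have deg: "toric_exp A (Poly_Mapping.single l 1 + \<alpha>) = (\<lambda>k. (A ! l) k + toric_exp A \<alpha> k)" for \<alpha>
    using assms by (simp add: fun_eq_iff toric_exp_add toric_exp_single)
  have "toric_part A \<beta> (var l * q)
      = var l * filter_mons (\<lambda>\<alpha>. (\<lambda>k. (A ! l) k + toric_exp A \<alpha> k) = \<beta>) q"
    unfolding var_pow_def filter_mons_single_mult deg ..
  also have "\<dots> = (if A ! l \<le> \<beta> then var l * toric_part A (\<beta> - A ! l) q else 0)"
  proof (cases "A ! l \<le> \<beta>")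
    case True
    then have "(\<lambda>k. (A ! l) k + x k) = \<beta> \<longleftrightarrow> x = \<beta> - A ! l" for x :: "nat \<Rightarrow> nat"
      by (auto simp: fun_eq_iff le_fun_def) (metis add_diff_cancel_left')
    with True show ?thesis by (simp cong: filter_mons_cong)
  next
    case False
    then have "(\<lambda>k. (A ! l) k + x k) \<noteq> \<beta>" for x :: "nat \<Rightarrow> nat"
      by (auto simp: le_fun_def)
    with False show ?thesis by (simp add: filter_mons_none)
  qed
  finally show ?thesis .
qed

locale positive_grading =
  fixes A :: "(nat \<Rightarrow> nat) list" and m :: nat
  assumes bounded_support: "\<forall>a\<in>set A. \<forall>l\<ge>m. a l = 0"
    and nonzero: "\<forall>a\<in>set A. a \<noteq> (\<lambda>_. 0)"
begin

definition weight :: "(nat \<Rightarrow> nat) \<Rightarrow> nat" where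
  "weight \<beta> = (\<Sum>l<m. \<beta> l)"

lemma weight_pos: "j < length A \<Longrightarrow> weight (A ! j) > 0"
proof -
  assume "j < length A"
  then have "A ! j \<in> set A" by simp
  then obtain l where l: "(A ! j) l \<noteq> 0" using nonzero by fastforce
  with \<open>A ! j \<in> set A\<close> bounded_support have "l < m" by (meson not_le)
  then have "(A ! j) l \<le> weight (A ! j)" unfolding weight_def by (intro member_le_sum) auto
  with l show ?thesis by simp
qed

lemma weight_diff_less: "j < length A \<Longrightarrow> A ! j \<le> \<beta> \<Longrightarrow> weight (\<beta> - A ! j) < weight \<beta>"
proof -
  assume j: "j < length A" and le: "A ! j \<le> \<beta>"
  have "weight \<beta> = weight (A ! j) + weight (\<beta> - A ! j)"
    using le unfolding weight_def by (simp add: le_fun_def flip: sum.distrib)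
  with weight_pos[OF j] show ?thesis by simp
qed

text \<open>Graded Nakayama, by induction on the weight of the degree, which drops when passing
  from \<open>x\<^sub>l q\<close> to \<open>q\<close>.\<close>

lemma toric_ideal_subset_if_spanning_mod_max_ideal_mult:
  fixes H :: "'k::field mpoly set"
  assumes fin: "finite H" and hom: "\<forall>h\<in>H. toric_homogeneous A h"
    and spans: "\<forall>p\<in>toric_ideal A. \<exists>s\<in>mpoly.span H. p - s \<in> max_ideal_mult (length A) (toric_ideal A)"
  shows "toric_ideal A \<subseteq> ideal_gen (length A) H"
proof (rule toric_ideal_subset_if_toric_parts)
  fix p :: "'k mpoly" and \<beta> assume "p \<in> toric_ideal A"
  then show "toric_part A \<beta> p \<in> ideal_gen (length A) H"
  proof (induction "weight \<beta>" arbitrary: p \<beta> rule: less_induct)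
    case less
    obtain s where s: "s \<in> mpoly.span H" "p - s \<in> max_ideal_mult (length A) (toric_ideal A)"
      using spans less.prems by blast
    obtain q where q: "\<forall>l<length A. q l \<in> toric_ideal A" "p - s = (\<Sum>l<length A. var l * q l)"
      using s(2) unfolding max_ideal_mult_def by blast
    obtain u where u: "s = (\<Sum>h\<in>H. cmult (u h) h)" using s(1) mpoly.span_finite[OF fin] by blast
    have "toric_part A \<beta> h \<in> ideal_gen (length A) H" if "h \<in> H" for h
      using toric_part_of_homogeneous[of A h \<beta>] hom that by (auto intro: ideal_gen_base)
    then have part_s: "toric_part A \<beta> s \<in> ideal_gen (length A) H"
      unfolding u filter_mons_sum cmult_def filter_mons_single_mult
      by (auto intro: ideal_gen_sum ideal_gen_cmult[unfolded cmult_def])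
    have part_q: "toric_part A \<beta> (var l * q l) \<in> ideal_gen (length A) H" if l: "l < length A" for l
    proof (cases "A ! l \<le> \<beta>")
      case True
      then have "toric_part A (\<beta> - A ! l) (q l) \<in> ideal_gen (length A) H"
        using less.hyps[OF weight_diff_less[OF l]] q(1) l by blast
      then show ?thesis
        unfolding toric_part_var_mult[OF l] if_P[OF True] by (rule ideal_gen_mult[OF poly_ring_var[OF l]])
    next
      case False
      show ?thesis unfolding toric_part_var_mult[OF l] if_not_P[OF False] by simp
    qed
    have "toric_part A \<beta> p = toric_part A \<beta> (s + (p - s))" by simp
    also have "\<dots> = toric_part A \<beta> s + (\<Sum>l<length A. toric_part A \<beta> (var l * q l))"
      unfolding filter_mons_add q(2) filter_mons_sum ..
    also have "\<dots> \<in> ideal_gen (length A) H"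
      using part_s part_q by (intro ideal_gen_add ideal_gen_sum) auto
    finally show ?case .
  qed
qed

end

section \<open>Comparing the minimal numbers of generators\<close>

context positive_grading begin

lemma exists_homogeneous_generating_set:
  fixes G :: "'k::field mpoly set"
  assumes G: "generating_set (length A) G (toric_ideal A)"
  obtains H :: "'k mpoly set"
  where "generating_set (length A) H (toric_ideal A)" and "card H \<le> card G"
    and "H \<subseteq> toric_ideal A" and "\<forall>h\<in>H. toric_homogeneous A h"
proof -
  let ?I = "toric_ideal A :: 'k mpoly set"
  let ?M = "max_ideal_mult (length A) ?I"
  have G_I: "G \<subseteq> ?I" using G ideal_gen_base unfolding generating_set_def by blast
  define S where "S = (\<Union>g\<in>G. toric_parts A g)"
  have S_I: "S \<subseteq> ?I" unfolding S_def using G_I toric_parts_subset_toric_ideal by blast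
  have "?I \<subseteq> ideal_gen (length A) S"
  proof
    fix p assume "p \<in> ?I"
    then have "p \<in> ideal_gen (length A) G" using G by (simp add: generating_set_def)
    then show "p \<in> ideal_gen (length A) S"
    proof (induction rule: ideal_gen_induct)
      case (mult r g)
      then have "toric_parts A g \<subseteq> S" by (auto simp: S_def)
      then show ?case by (intro ideal_gen_mult[OF mult(1)] ideal_gen_if_toric_parts_subset)
    qed (simp_all add: ideal_gen_add)
  qed
  then have S_spans: "\<forall>p\<in>?I. \<exists>s\<in>mpoly.span S. p - s \<in> ?M"
    using ideal_gen_mod_max_ideal_mult[OF S_I] by blast
  have S_fin: "finite S" unfolding S_def using G by (auto simp: generating_set_def finite_toric_parts)
  obtain H where H_S: "H \<subseteq> S" and H_spans: "\<forall>p\<in>?I. \<exists>s\<in>mpoly.span H. p - s \<in> ?M"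
    and H_ind: "\<forall>c. (\<Sum>h\<in>H. cmult (c h) h) \<in> ?M \<longrightarrow> (\<forall>h\<in>H. c h = 0)"
    by (rule mpoly.exists_independent_mod_spanning_subset[OF subspace_max_ideal_mult S_fin S_spans])
  have H_fin: "finite H" using H_S S_fin finite_subset by blast
  have H_I: "H \<subseteq> ?I" using H_S S_I by blast
  have H_hom: "\<forall>h\<in>H. toric_homogeneous A h"
    using H_S toric_homogeneous_toric_parts unfolding S_def by blast
  have "\<forall>h\<in>H. \<exists>s\<in>mpoly.span G. h - s \<in> ?M"
    using ideal_gen_mod_max_ideal_mult[OF G_I] H_I G by (auto simp: generating_set_def)
  then have "card H \<le> card G"
    using mpoly.card_le_if_independent_mod[OF subspace_max_ideal_mult _ H_fin H_ind] G
    by (auto simp: generating_set_def)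
  moreover have "ideal_gen (length A) H = ?I"
  proof
    show "ideal_gen (length A) H \<subseteq> ?I" by (rule ideal_gen_subset_toric_ideal[OF H_I])
    show "?I \<subseteq> ideal_gen (length A) H"
      by (rule toric_ideal_subset_if_spanning_mod_max_ideal_mult[OF H_fin H_hom H_spans])
  qed
  moreover have "H \<subseteq> poly_ring (length A)" using H_I by (auto simp: in_toric_ideal)
  ultimately show ?thesis using H_fin H_I H_hom by (intro that[of H]) (auto simp: generating_set_def)
qed

end

locale positive_rescaling = positive_grading A m + rescaling A i b for A m i b
begin

lemma exists_generating_set_of_rescaled:
  fixes G :: "'k::field mpoly set"
  assumes "generating_set (length A) G (toric_ideal A)"
  obtains G' :: "'k mpoly set"
  where "generating_set (length A) G' (toric_ideal A')" and "card G' \<le> card G"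
proof -
  obtain H :: "'k mpoly set" where H: "generating_set (length A) H (toric_ideal A)" "card H \<le> card G"
    "H \<subseteq> toric_ideal A" "\<forall>h\<in>H. toric_homogeneous A h"
    using exists_homogeneous_generating_set[OF assms] by blast
  have "\<forall>h\<in>H. \<exists>rq. snd rq \<in> toric_ideal A' \<and> h = var_pow i (fst rq) * stretch (snd rq)"
    using H(3,4) by (metis toric_homogeneous_factor subsetD fst_conv snd_conv)
  then obtain f where f: "\<And>h. h \<in> H \<Longrightarrow> snd (f h) \<in> toric_ideal A'"
    "\<And>h. h \<in> H \<Longrightarrow> h = var_pow i (fst (f h)) * stretch (snd (f h))"
    by metis
  define G' where "G' = (\<lambda>h. snd (f h)) ` H"
  have G'_I: "G' \<subseteq> toric_ideal A'" unfolding G'_def using f(1) by blast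
  have shrink_ideal_gen: "shrink x \<in> ideal_gen (length A) G'" if "x \<in> ideal_gen (length A) H" for x
    using that
  proof (induction rule: ideal_gen_induct)
    case (mult r h)
    have "shrink (r * h) = shrink (r * var_pow i (fst (f h))) * snd (f h)"
      using f(2)[OF mult(2)] by (metis mult.assoc shrink_mult_stretch)
    moreover have "shrink (r * var_pow i (fst (f h))) \<in> poly_ring (length A)"
      by (intro poly_ring_shrink poly_ring_mult mult(1) poly_ring_var_pow)
    moreover have "snd (f h) \<in> G'" unfolding G'_def using mult(2) by blast
    ultimately show ?case by (metis ideal_gen_base ideal_gen_mult)
  qed (simp_all add: shrink_add ideal_gen_add)
  have "ideal_gen (length A) G' = toric_ideal A'"
  proof
    show "ideal_gen (length A) G' \<subseteq> toric_ideal A'"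
      using ideal_gen_subset_toric_ideal[OF G'_I] by simp
    show "toric_ideal A' \<subseteq> ideal_gen (length A) G'"
    proof
      fix q :: "'k mpoly" assume "q \<in> toric_ideal A'"
      then have "stretch q \<in> ideal_gen (length A) H"
        using toric_ideal_stretch H(1) by (simp add: generating_set_def)
      then show "q \<in> ideal_gen (length A) G'" using shrink_ideal_gen shrink_stretch by metis
    qed
  qed
  moreover have "G' \<subseteq> poly_ring (length A)" using G'_I by (auto simp: in_toric_ideal)
  moreover have "finite G'" "card G' \<le> card H"
    unfolding G'_def using H(1) by (auto simp: generating_set_def card_image_le)
  ultimately show ?thesis using H(2) by (intro that[of G']) (auto simp: generating_set_def)
qed

lemma mu_toric_ideal_A':
  "mu (length A) (toric_ideal A' :: 'k::field mpoly set) = mu (length A) (toric_ideal A :: 'k mpoly set)"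
proof (rule mu_eq_if_generating_sets_bounded)
  fix G' :: "'k mpoly set"
  assume G': "generating_set (length A) G' (toric_ideal A')"
  then have "generating_set (length A) (stretch ` G') (toric_ideal A)"
    by (rule generating_set_stretch_image)
  moreover have "card (stretch ` G') \<le> card G'"
    using G' by (simp add: card_image_le generating_set_def)
  ultimately show "\<exists>G :: 'k mpoly set. generating_set (length A) G (toric_ideal A) \<and> card G \<le> card G'"
    by blast
next
  fix G :: "'k mpoly set"
  assume "generating_set (length A) G (toric_ideal A)"
  then show "\<exists>G' :: 'k mpoly set. generating_set (length A) G' (toric_ideal A') \<and> card G' \<le> card G"
    by (metis exists_generating_set_of_rescaled)
qed

end

context rescaling begin

lemma lin_indep_Q_A'_iff:
  assumes S: "S \<subseteq> {..<length A}"
  shows "lin_indep_Q A' S \<longleftrightarrow> lin_indep_Q A S"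
proof -
  have b0: "(of_nat b :: rat) \<noteq> 0" using b_pos by simp
  have rescale: "(\<Sum>j\<in>S. c j * of_nat ((A' ! j) l))
      = (\<Sum>j\<in>S. (if j = i then of_nat b * c j else c j) * of_nat ((A ! j) l))"
    for c :: "nat \<Rightarrow> rat" and l
    by (rule sum.cong) (use S in \<open>auto simp: nth_A'\<close>)
  show ?thesis
  proof
    assume ind: "lin_indep_Q A' S"
    show "lin_indep_Q A S" unfolding lin_indep_Q_def
    proof (intro allI impI ballI)
      fix c :: "nat \<Rightarrow> rat" and j
      assume c: "\<forall>l. (\<Sum>j\<in>S. c j * of_nat ((A ! j) l)) = 0" and j: "j \<in> S"
      define c' where "c' j = (if j = i then c j / of_nat b else c j)" for j
      have "(if j = i then of_nat b * c' j else c' j) = c j" for j using b0 by (simp add: c'_def)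
      then have "\<forall>l. (\<Sum>j\<in>S. c' j * of_nat ((A' ! j) l)) = 0" using c unfolding rescale by simp
      then have "c' j = 0" using ind j unfolding lin_indep_Q_def by blast
      then show "c j = 0" using b0 by (simp add: c'_def split: if_splits)
    qed
  next
    assume ind: "lin_indep_Q A S"
    show "lin_indep_Q A' S" unfolding lin_indep_Q_def
    proof (intro allI impI ballI)
      fix c :: "nat \<Rightarrow> rat" and j
      assume "\<forall>l. (\<Sum>j\<in>S. c j * of_nat ((A' ! j) l)) = 0" and j: "j \<in> S"
      then have "(if j = i then of_nat b * c j else c j) = 0"
        unfolding rescale
        using ind[unfolded lin_indep_Q_def, rule_format, of "\<lambda>j. if j = i then of_nat b * c j else c j"] j
        by blast
      then show "c j = 0" using b0 by (simp split: if_splits)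
    qed
  qed
qed

lemma toric_height_A': "toric_height A' = toric_height A"
proof -
  have "{card S |S. S \<subseteq> {..<length A'} \<and> lin_indep_Q A' S}
      = {card S |S. S \<subseteq> {..<length A} \<and> lin_indep_Q A S}"
    using lin_indep_Q_A'_iff by auto
  then show ?thesis unfolding toric_height_def lattice_rank_def by simp
qed

end

theorem mainTheorem3:
  fixes A :: "(nat \<Rightarrow> nat) list" and m i b :: nat
  assumes "\<forall>a\<in>set A. \<forall>l\<ge>m. a l = 0"
    and "\<forall>a\<in>set A. a \<noteq> (\<lambda>_. 0)"
    and "i < length A"
    and "in_Q_span_others A i"
    and "b > 0" and "b dvd B_index A i"
  shows "mu (length A) (toric_ideal A :: 'k::field mpoly set)
           = mu (length A) (toric_ideal (A[i := (\<lambda>l. b * (A ! i) l)]) :: 'k mpoly set)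
         \<and> (toric_ci TYPE('k) A \<longleftrightarrow> toric_ci TYPE('k) (A[i := (\<lambda>l. b * (A ! i) l)]))"
proof -
  interpret positive_rescaling A m i b
    using assms(1-3,5-6) by unfold_locales auto
  have "A[i := (\<lambda>l. b * (A ! i) l)] = A'" by (simp add: A'_def)
  moreover have "mu (length A) (toric_ideal A' :: 'k mpoly set) = mu (length A) (toric_ideal A :: 'k mpoly set)"
    by (rule mu_toric_ideal_A')
  ultimately show ?thesis using toric_height_A' unfolding toric_ci_def by simp
qed

end
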